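(* Let $(X,d,A)$ be a metric pair and $p\in[1,\infty)$. If $(X,d)$ is complete, then $(\overline{D}_p(X,A),W_p)$ is complete.
   Context: A metric on $X$ is a map $d:X\times X\to[0,\infty]$ with $d(x,x)=0$, symmetry and the triangle inequality (infinite distances allowed, $d(x,y)=0$ need not imply $x=y$, so limits need not be unique); complete means every Cauchy sequence converges. A metric pair $(X,d,A)$ is such a space with a closed subset $A$. Write $d(x,A)=\inf_{a\in A}d(x,a)$, $A^\delta=\{x:d(x,A)<\delta\}$ for $\delta\in(0,\infty]$. $\overline{D}(X,A)$ is the set of countable formal sums $\hat\alpha=\sum_{i\in I}x_i$ of points of $X\setminus A$ (repetitions allowed); $0$ the empty sum. A matching of $\hat\alpha=\sum_{i\in I}x_i$, $\hat\beta=\sum_{j\in J}y_j$ is a formal sum $\sum_{k\in K}(x_k,y_{\varphi(k)})+\sum_{i\in I\setminus K}(x_i,z_i)+\sum_{j\in J\setminus\varphi(K)}(w_j,y_j)$ with $K\subset I$, $\varphi$ injective, $z_i,w_j\in A$; its $p$-cost is the $\ell^p$ norm of the distances of paired points; $W_p$ is the infimum of $p$-costs. $u_\delta(\alpha)$, $\ell_\delta(\alpha)$ are the restrictions of $\hat\alpha$ to $X\setminus A^\delta$ and to $A^\delta\setminus A$, and $\overline{D}_p(X,A)=\{\alpha: |u_\infty(\alpha)|<\infty,\ W_p(\ell_\infty(\alpha),0)<\infty\}$. *)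

theory Defs
  imports "HOL-Analysis.Analysis"
begin

definition emetric_on :: "'a set \<Rightarrow> ('a \<Rightarrow> 'a \<Rightarrow> ennreal) \<Rightarrow> bool" where
  "emetric_on X d \<longleftrightarrow>
     (\<forall>x\<in>X. d x x = 0) \<and> (\<forall>x\<in>X. \<forall>y\<in>X. d x y = d y x) \<and>
     (\<forall>x\<in>X. \<forall>y\<in>X. \<forall>z\<in>X. d x z \<le> d x y + d y z)"

definition eclosed_in :: "'a set \<Rightarrow> ('a \<Rightarrow> 'a \<Rightarrow> ennreal) \<Rightarrow> 'a set \<Rightarrow> bool" where
  "eclosed_in X d A \<longleftrightarrow> A \<subseteq> X \<and>
     (\<forall>x\<in>X - A. \<exists>e::ennreal>0. \<forall>y\<in>X. d x y < e \<longrightarrow> y \<notin> A)"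

definition metric_pair :: "'a set \<Rightarrow> ('a \<Rightarrow> 'a \<Rightarrow> ennreal) \<Rightarrow> 'a set \<Rightarrow> bool" where
  "metric_pair X d A \<longleftrightarrow> emetric_on X d \<and> eclosed_in X d A"

definition ecomplete_on :: "'b set \<Rightarrow> ('b \<Rightarrow> 'b \<Rightarrow> ennreal) \<Rightarrow> bool" where
  "ecomplete_on S ds \<longleftrightarrow>
     (\<forall>s::nat \<Rightarrow> 'b. (\<forall>n. s n \<in> S) \<and> (\<forall>e::ennreal>0. \<exists>N. \<forall>m\<ge>N. \<forall>n\<ge>N. ds (s m) (s n) < e)
        \<longrightarrow> (\<exists>l\<in>S. \<forall>e::ennreal>0. \<exists>N. \<forall>n\<ge>N. ds (s n) l < e))"

definition einfdist :: "('a \<Rightarrow> 'a \<Rightarrow> ennreal) \<Rightarrow> 'a \<Rightarrow> 'a set \<Rightarrow> ennreal" where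
  "einfdist d x A = (INF a\<in>A. d x a)"

definition epowr :: "ennreal \<Rightarrow> real \<Rightarrow> ennreal" where
  "epowr x r = (if x = top then top else ennreal (enn2real x powr r))"

text \<open>Formal sums (persistence diagrams) are represented by multiplicity functions
  'a \<Rightarrow> enat; the formal sum has index set {(x,k). k < m x}, the point of index (x,k) being x.\<close>
type_synonym 'a fsum = "'a \<Rightarrow> enat"

definition fs_idx :: "'a fsum \<Rightarrow> ('a \<times> nat) set" where
  "fs_idx \<alpha> = {(x, k). enat k < \<alpha> x}"

definition Dbar :: "'a set \<Rightarrow> 'a set \<Rightarrow> 'a fsum set" where
  "Dbar X A = {\<alpha>. countable {x. \<alpha> x \<noteq> 0} \<and> {x. \<alpha> x \<noteq> 0} \<subseteq> X - A}"

definition fs_zero :: "'a fsum" where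
  "fs_zero = (\<lambda>_. 0)"

definition is_matching :: "'a set \<Rightarrow> 'a fsum \<Rightarrow> 'a fsum \<Rightarrow> ('a \<times> nat) set \<Rightarrow>
    ('a \<times> nat \<Rightarrow> 'a \<times> nat) \<Rightarrow> ('a \<times> nat \<Rightarrow> 'a) \<Rightarrow> ('a \<times> nat \<Rightarrow> 'a) \<Rightarrow> bool" where
  "is_matching A \<alpha> \<beta> K \<phi> z w \<longleftrightarrow>
     K \<subseteq> fs_idx \<alpha> \<and> inj_on \<phi> K \<and> \<phi> ` K \<subseteq> fs_idx \<beta> \<and>
     z ` (fs_idx \<alpha> - K) \<subseteq> A \<and> w ` (fs_idx \<beta> - \<phi> ` K) \<subseteq> A"

definition matching_cost :: "('a \<Rightarrow> 'a \<Rightarrow> ennreal) \<Rightarrow> real \<Rightarrow> 'a fsum \<Rightarrow> 'a fsum \<Rightarrow>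
    ('a \<times> nat) set \<Rightarrow> ('a \<times> nat \<Rightarrow> 'a \<times> nat) \<Rightarrow> ('a \<times> nat \<Rightarrow> 'a) \<Rightarrow> ('a \<times> nat \<Rightarrow> 'a) \<Rightarrow> ennreal" where
  "matching_cost d p \<alpha> \<beta> K \<phi> z w =
     epowr ((\<Sum>\<^sub>\<infinity>k\<in>K. epowr (d (fst k) (fst (\<phi> k))) p)
          + (\<Sum>\<^sub>\<infinity>i\<in>fs_idx \<alpha> - K. epowr (d (fst i) (z i)) p)
          + (\<Sum>\<^sub>\<infinity>j\<in>fs_idx \<beta> - \<phi> ` K. epowr (d (w j) (fst j)) p)) (1 / p)"

definition Wp :: "('a \<Rightarrow> 'a \<Rightarrow> ennreal) \<Rightarrow> 'a set \<Rightarrow> real \<Rightarrow> 'a fsum \<Rightarrow> 'a fsum \<Rightarrow> ennreal" where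
  "Wp d A p \<alpha> \<beta> = (INF (K, \<phi>, z, w) \<in> {(K, \<phi>, z, w). is_matching A \<alpha> \<beta> K \<phi> z w}.
                        matching_cost d p \<alpha> \<beta> K \<phi> z w)"

definition fs_restrict :: "'a fsum \<Rightarrow> 'a set \<Rightarrow> 'a fsum" where
  "fs_restrict \<alpha> S = (\<lambda>x. if x \<in> S then \<alpha> x else 0)"

definition nbhd :: "'a set \<Rightarrow> ('a \<Rightarrow> 'a \<Rightarrow> ennreal) \<Rightarrow> 'a set \<Rightarrow> ennreal \<Rightarrow> 'a set" where
  "nbhd X d A \<delta> = {x\<in>X. einfdist d x A < \<delta>}"

definition upper_part :: "'a set \<Rightarrow> ('a \<Rightarrow> 'a \<Rightarrow> ennreal) \<Rightarrow> 'a set \<Rightarrow> ennreal \<Rightarrow> 'a fsum \<Rightarrow> 'a fsum" where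
  "upper_part X d A \<delta> \<alpha> = fs_restrict \<alpha> (X - nbhd X d A \<delta>)"

definition lower_part :: "'a set \<Rightarrow> ('a \<Rightarrow> 'a \<Rightarrow> ennreal) \<Rightarrow> 'a set \<Rightarrow> ennreal \<Rightarrow> 'a fsum \<Rightarrow> 'a fsum" where
  "lower_part X d A \<delta> \<alpha> = fs_restrict \<alpha> (nbhd X d A \<delta> - A)"

definition Dbar_p :: "'a set \<Rightarrow> ('a \<Rightarrow> 'a \<Rightarrow> ennreal) \<Rightarrow> 'a set \<Rightarrow> real \<Rightarrow> 'a fsum set" where
  "Dbar_p X d A p = {\<alpha>\<in>Dbar X A. finite (fs_idx (upper_part X d A top \<alpha>)) \<and>
                       Wp d A p (lower_part X d A top \<alpha>) fs_zero < top}"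

end

theory Submission
  imports Defs
begin

text \<open>
  Given a Cauchy sequence in Dbar_p, pass to a subsequence \<open>\<beta> k\<close> with
  \<open>W\<^sub>p (\<beta> k) (\<beta> (k + 1)) < 2^-k\<close> and fix matchings of cost below \<open>2^-k\<close> between consecutive
  terms. Following these matchings, each point of \<open>\<beta> s\<close> traces a track through
  \<open>\<beta> (s + 1), \<beta> (s + 2), \<dots>\<close> which is either sent to \<open>A\<close> at some level or is a Cauchy sequence
  in \<open>X\<close>, since its step from level \<open>k\<close> has length at most \<open>2^-k\<close>. The limits outside \<open>A\<close> of the
  surviving tracks, one for each point where a track starts, form the limit diagram \<open>L\<close>.
  Matching every point of \<open>\<beta> J\<close> with the end of its track gives \<open>W\<^sub>p (\<beta> J) L \<le> 2 * 2^-J\<close>: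
  by Minkowski's inequality its cost is at most the sum over the levels \<open>m \<ge> J\<close> of the costs of the
  matchings between \<open>\<beta> m\<close> and \<open>\<beta> (m + 1)\<close>, because distinct tracks never use the same pair.
  Finally \<open>L\<close> lies in Dbar_p, because a matching of finite cost pairs the points at infinite
  distance from \<open>A\<close> among themselves and restricts to the points at finite distance.
\<close>

section \<open>Real powers and l^p norms in [0, \<infinity>]\<close>

lemma epowr_top [simp]: "epowr top r = top"
  by (simp add: epowr_def)

lemma epowr_ennreal [simp]: "x \<ge> 0 \<Longrightarrow> epowr (ennreal x) r = ennreal (x powr r)"
  by (simp add: epowr_def)

lemma epowr_0 [simp]: "epowr 0 r = 0"
  by (simp add: epowr_def)

lemma epowr_mono:
  assumes "x \<le> y" "r \<ge> 0"
  shows "epowr x r \<le> epowr y r"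
proof (cases y rule: ennreal_cases)
  case (real b)
  with assms show ?thesis
    by (cases x rule: ennreal_cases) (auto simp: top_unique intro!: ennreal_leI powr_mono2)
qed simp

lemma epowr_epowr_inverse [simp]: "r > 0 \<Longrightarrow> epowr (epowr x r) (1/r) = x"
  by (cases x rule: ennreal_cases) (simp_all add: powr_powr)

lemma epowr_inverse_epowr [simp]: "r > 0 \<Longrightarrow> epowr (epowr x (1/r)) r = x"
  using epowr_epowr_inverse[of "1/r" x] by simp

lemma epowr_inverse_le_iff:
  assumes "r > 0"
  shows "epowr x (1/r) \<le> y \<longleftrightarrow> x \<le> epowr y r"
  by (metis assms epowr_inverse_epowr epowr_epowr_inverse epowr_mono less_eq_real_def
      zero_le_divide_1_iff)

lemma powr_convex_combination_le:
  fixes t u v p :: real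
  assumes "0 \<le> t" "t \<le> 1" "u \<ge> 0" "v \<ge> 0" "p \<ge> 1"
  shows "(t * u + (1 - t) * v) powr p \<le> t * u powr p + (1 - t) * v powr p"
proof -
  have below_one: "c powr p \<le> c" if "0 \<le> c" "c \<le> 1" for c :: real
    using powr_mono'[of 1 p c] that assms(5) by (cases "c = 0") simp_all
  consider "u = 0" | "v = 0" | "u > 0" "v > 0"
    using assms(3,4) by linarith
  then show ?thesis
  proof cases
    case 1
    have "((1 - t) * v) powr p = (1 - t) powr p * v powr p"
      using assms by (simp add: powr_mult)
    also have "\<dots> \<le> (1 - t) * v powr p"
      using assms below_one[of "1 - t"] by (intro mult_right_mono) auto
    finally show ?thesis using 1 assms(5) by simp
  next
    case 2
    have "(t * u) powr p = t powr p * u powr p"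
      using assms by (simp add: powr_mult)
    also have "\<dots> \<le> t * u powr p"
      using assms below_one[of t] by (intro mult_right_mono) auto
    finally show ?thesis using 2 assms(5) by simp
  next
    case 3
    show ?thesis
      using convex_onD[OF powr_convex[OF assms(5)], of "1 - t" u v] 3 assms(1,2)
      by (simp add: algebra_simps)
  qed
qed

text \<open>The pointwise inequality behind Minkowski's inequality: convexity of \<open>x powr p\<close>
  applied with weights \<open>a / (a + b)\<close> and \<open>b / (a + b)\<close>.\<close>
lemma powr_add_le_weighted:
  fixes x y a b p :: real
  assumes "x \<ge> 0" "y \<ge> 0" "a > 0" "b > 0" "p \<ge> 1"
  shows "(x + y) powr p \<le> (a + b) powr (p - 1) * (a powr (1 - p) * x powr p + b powr (1 - p) * y powr p)"
proof -
  define t where "t = a / (a + b)"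
  have t: "0 \<le> t" "t \<le> 1" "1 - t = b / (a + b)"
    using assms by (auto simp: t_def field_simps)
  have "t * (x / a) = x / (a + b)" "(1 - t) * (y / b) = y / (a + b)"
    using assms unfolding t(3) by (simp_all add: t_def)
  then have "(x + y) / (a + b) = t * (x / a) + (1 - t) * (y / b)"
    by (simp add: add_divide_distrib)
  then have "((x + y) / (a + b)) powr p \<le> t * (x / a) powr p + (1 - t) * (y / b) powr p"
    using powr_convex_combination_le[OF t(1,2), of "x / a" "y / b" p] assms by simp
  then have "(x + y) powr p \<le> (a + b) powr p * (t * (x / a) powr p + (1 - t) * (y / b) powr p)"
    using assms by (simp add: powr_divide divide_le_eq mult.commute)
  also have "\<dots> = (a + b) powr (p - 1) * ((a + b) * t * (x / a) powr p + (a + b) * (1 - t) * (y / b) powr p)"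
  proof -
    have "(a + b) powr p = (a + b) powr (p - 1) * (a + b)"
      using assms by (simp add: powr_diff)
    then show ?thesis by (simp add: algebra_simps)
  qed
  also have "\<dots> = (a + b) powr (p - 1) * (a powr (1 - p) * x powr p + b powr (1 - p) * y powr p)"
  proof -
    have "(a + b) * t = a" "(a + b) * (1 - t) = b"
      using assms unfolding t(3) by (simp_all add: t_def)
    moreover have "c * (u / c) powr p = c powr (1 - p) * u powr p" if "c > 0" "u \<ge> 0" for c u
      using that by (simp add: powr_divide powr_diff)
    ultimately show ?thesis
      using assms by simp
  qed
  finally show ?thesis .
qed

lemma epowr_add_le_weighted:
  fixes x y :: ennreal and a b p :: real
  assumes "a > 0" "b > 0" "p \<ge> 1"
  shows "epowr (x + y) p \<le> ennreal ((a + b) powr (p - 1) * a powr (1 - p)) * epowr x p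
                            + ennreal ((a + b) powr (p - 1) * b powr (1 - p)) * epowr y p"
proof (cases "x = top \<or> y = top")
  case True
  then show ?thesis
    using assms by (auto simp: ennreal_mult_top)
next
  case False
  then obtain u v where uv: "x = ennreal u" "y = ennreal v" "u \<ge> 0" "v \<ge> 0"
    by (metis ennreal_cases)
  have "(u + v) powr p \<le> (a + b) powr (p - 1) * a powr (1 - p) * u powr p
                          + (a + b) powr (p - 1) * b powr (1 - p) * v powr p"
    using powr_add_le_weighted[OF uv(3,4) assms] by (simp add: algebra_simps)
  then have "ennreal ((u + v) powr p) \<le> ennreal ((a + b) powr (p - 1) * a powr (1 - p) * u powr p
                          + (a + b) powr (p - 1) * b powr (1 - p) * v powr p)"
    by (rule ennreal_leI)
  also have "\<dots> = ennreal ((a + b) powr (p - 1) * a powr (1 - p)) * epowr x p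
                   + ennreal ((a + b) powr (p - 1) * b powr (1 - p)) * epowr y p"
    using uv by (simp add: ennreal_mult ennreal_plus)
  finally show ?thesis
    using uv by (simp flip: ennreal_plus)
qed

text \<open>The library's \<open>summable_on_ennreal\<close> is stated for \<open>ennreal_of_enat\<close> only.\<close>
lemma ennreal_summable_on [simp]: "(f :: 'a \<Rightarrow> ennreal) summable_on A"
  by (simp add: nonneg_summable_on_complete)

lemma infsum_cmult_ennreal: "(\<Sum>\<^sub>\<infinity>i\<in>A. c * f i) = c * (\<Sum>\<^sub>\<infinity>i\<in>A. f i :: ennreal)"
  by (simp add: nonneg_infsum_complete SUP_mult_left_ennreal sum_distrib_left)

definition lp_norm :: "real \<Rightarrow> 'i set \<Rightarrow> ('i \<Rightarrow> ennreal) \<Rightarrow> ennreal" where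
  "lp_norm p I f = epowr (\<Sum>\<^sub>\<infinity>i\<in>I. epowr (f i) p) (1/p)"

lemma lp_norm_le_iff: "p > 0 \<Longrightarrow> lp_norm p I f \<le> c \<longleftrightarrow> (\<Sum>\<^sub>\<infinity>i\<in>I. epowr (f i) p) \<le> epowr c p"
  by (simp add: lp_norm_def epowr_inverse_le_iff)

lemma epowr_lp_norm: "p > 0 \<Longrightarrow> epowr (lp_norm p I f) p = (\<Sum>\<^sub>\<infinity>i\<in>I. epowr (f i) p)"
  by (simp add: lp_norm_def)

lemma lp_norm_cong: "(\<And>i. i \<in> I \<Longrightarrow> f i = g i) \<Longrightarrow> lp_norm p I f = lp_norm p I g"
  unfolding lp_norm_def by (metis (mono_tags, lifting) infsum_cong)

lemma lp_norm_zero [simp]: "lp_norm p I (\<lambda>_. 0) = 0"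
  by (simp add: lp_norm_def)

lemma lp_norm_mono:
  assumes "p > 0" "\<And>i. i \<in> I \<Longrightarrow> f i \<le> g i"
  shows "lp_norm p I f \<le> lp_norm p I g"
  unfolding lp_norm_def using assms by (intro epowr_mono infsum_mono) auto

lemma lp_norm_subset:
  assumes "p > 0" "I \<subseteq> J"
  shows "lp_norm p I f \<le> lp_norm p J f"
  unfolding lp_norm_def using assms by (intro epowr_mono infsum_mono_neutral) auto

lemma lp_norm_eq_restrict:
  assumes "J \<subseteq> I" "\<And>i. i \<in> I - J \<Longrightarrow> f i = 0"
  shows "lp_norm p I f = lp_norm p J f"
proof -
  have "(\<Sum>\<^sub>\<infinity>i\<in>I. epowr (f i) p) = (\<Sum>\<^sub>\<infinity>i\<in>J. epowr (f i) p)"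
    using assms by (intro infsum_cong_neutral) auto
  then show ?thesis
    by (simp add: lp_norm_def)
qed

lemma le_lp_norm:
  assumes "p > 0" "i \<in> I"
  shows "f i \<le> lp_norm p I f"
  using lp_norm_subset[OF assms(1), of "{i}" I f] assms by (simp add: lp_norm_def)

lemma lp_norm_reindex:
  assumes "p > 0" "S \<subseteq> I" "inj_on h S" "h ` S \<subseteq> J"
    and "\<And>i. i \<in> I \<Longrightarrow> f i \<le> (if i \<in> S then g (h i) else 0)"
  shows "lp_norm p I f \<le> lp_norm p J g"
proof -
  have "epowr (f i) p \<le> epowr (g (h i)) p" if "i \<in> S" for i
    using assms(1) assms(5)[of i] assms(2) that by (intro epowr_mono) auto
  moreover have "f i = 0" if "i \<in> I - S" for i
    using assms(5)[of i] that by simp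
  ultimately have "(\<Sum>\<^sub>\<infinity>i\<in>I. epowr (f i) p) \<le> (\<Sum>\<^sub>\<infinity>i\<in>S. epowr (g (h i)) p)"
    using assms(1) by (intro infsum_mono_neutral) auto
  also have "\<dots> = (\<Sum>\<^sub>\<infinity>j\<in>h ` S. epowr (g j) p)"
    using infsum_reindex[OF assms(3), of "\<lambda>j. epowr (g j) p"] by (simp add: o_def)
  also have "\<dots> \<le> (\<Sum>\<^sub>\<infinity>j\<in>J. epowr (g j) p)"
    using assms(4) by (intro infsum_mono_neutral) auto
  finally show ?thesis
    unfolding lp_norm_def using assms(1) by (intro epowr_mono) auto
qed

lemma lp_norm_le_finite_subsets:
  assumes "p > 0" "\<And>F. finite F \<Longrightarrow> F \<subseteq> I \<Longrightarrow> lp_norm p F f \<le> c"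
  shows "lp_norm p I f \<le> c"
  using assms unfolding lp_norm_le_iff[OF assms(1)] by (intro infsum_le_finite_sums) auto

lemma lp_norm_add_le_positive:
  assumes "p \<ge> 1" "lp_norm p I f = ennreal a" "a > 0" "lp_norm p I g = ennreal b" "b > 0"
  shows "lp_norm p I (\<lambda>i. f i + g i) \<le> lp_norm p I f + lp_norm p I g"
proof -
  have p: "p > 0" using assms by simp
  define k where "k c = (a + b) powr (p - 1) * c powr (1 - p)" for c
  have "(\<Sum>\<^sub>\<infinity>i\<in>I. epowr (f i + g i) p)
      \<le> (\<Sum>\<^sub>\<infinity>i\<in>I. ennreal (k a) * epowr (f i) p + ennreal (k b) * epowr (g i) p)"
    unfolding k_def using assms by (intro infsum_mono epowr_add_le_weighted) auto
  also have "\<dots> = ennreal (k a) * epowr (lp_norm p I f) p + ennreal (k b) * epowr (lp_norm p I g) p"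
    by (simp add: infsum_add infsum_cmult_ennreal epowr_lp_norm[OF p])
  also have "\<dots> = ennreal (k a * a powr p + k b * b powr p)"
    using assms by (simp add: k_def ennreal_mult)
  also have "k a * a powr p + k b * b powr p = (a + b) powr p"
  proof -
    have "k c * c powr p = (a + b) powr (p - 1) * c" if "c > 0" for c
      using that by (simp add: k_def mult.assoc powr_add[symmetric])
    moreover have "(a + b) powr p = (a + b) powr (p - 1) * (a + b)"
      using assms by (simp add: powr_diff)
    ultimately show ?thesis
      using assms by (simp add: distrib_left)
  qed
  finally show ?thesis
    using assms p by (simp add: lp_norm_le_iff flip: ennreal_plus)
qed

lemma lp_norm_add_le:
  assumes "p \<ge> 1"
  shows "lp_norm p I (\<lambda>i. f i + g i) \<le> lp_norm p I f + lp_norm p I g"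
proof -
  have p: "p > 0" using assms by simp
  consider "lp_norm p I f = top \<or> lp_norm p I g = top" | "lp_norm p I f = 0" | "lp_norm p I g = 0"
    | a b where "lp_norm p I f = ennreal a" "a > 0" "lp_norm p I g = ennreal b" "b > 0"
    by (metis ennreal_cases ennreal_eq_0_iff not_le)
  then show ?thesis
  proof cases
    case 2
    then have "f i = 0" if "i \<in> I" for i
      using le_lp_norm[OF p that, of f] by simp
    then show ?thesis
      using 2 lp_norm_cong[of I "\<lambda>i. f i + g i" g p] by simp
  next
    case 3
    then have "g i = 0" if "i \<in> I" for i
      using le_lp_norm[OF p that, of g] by simp
    then show ?thesis
      using 3 lp_norm_cong[of I "\<lambda>i. f i + g i" f p] by simp
  next
    case 4
    then show ?thesis
      by (rule lp_norm_add_le_positive[OF assms])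
  qed auto
qed

lemma lp_norm_sum_le:
  assumes "p \<ge> 1" "finite S"
  shows "lp_norm p I (\<lambda>i. \<Sum>m\<in>S. f m i) \<le> (\<Sum>m\<in>S. lp_norm p I (f m))"
  using assms(2)
proof (induction S rule: finite_induct)
  case (insert m S)
  have "lp_norm p I (\<lambda>i. \<Sum>m\<in>insert m S. f m i) \<le> lp_norm p I (f m) + lp_norm p I (\<lambda>i. \<Sum>m\<in>S. f m i)"
    using insert lp_norm_add_le[OF assms(1)] by simp
  also have "\<dots> \<le> (\<Sum>m\<in>insert m S. lp_norm p I (f m))"
    using insert by (simp add: add_left_mono)
  finally show ?case .
qed simp

lemma lp_norm_le_card_mult:
  assumes "p \<ge> 1" "finite F" "e \<ge> 0" "\<And>i. i \<in> F \<Longrightarrow> f i \<le> ennreal e"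
  shows "lp_norm p F f \<le> ennreal (real (card F) * e)"
proof -
  have "epowr (f i) p \<le> ennreal (e powr p)" if "i \<in> F" for i
    using epowr_mono[OF assms(4)[OF that], of p] assms by simp
  then have "(\<Sum>i\<in>F. epowr (f i) p) \<le> (\<Sum>i\<in>F. ennreal (e powr p))"
    by (rule sum_mono)
  then have "(\<Sum>\<^sub>\<infinity>i\<in>F. epowr (f i) p) \<le> (\<Sum>i\<in>F. ennreal (e powr p))"
    using assms(2) by simp
  also have "\<dots> = ennreal (real (card F) * e powr p)"
    by (simp add: ennreal_of_nat_eq_real_of_nat ennreal_mult)
  also have "\<dots> \<le> ennreal ((real (card F) * e) powr p)"
  proof (cases "card F = 0")
    case False
    then have "real (card F) \<le> real (card F) powr p"
      using assms(1) powr_mono[of 1 p "real (card F)"] by simp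
    then show ?thesis
      using assms by (intro ennreal_leI) (simp add: powr_mult mult_right_mono)
  qed simp
  finally show ?thesis
    using assms by (simp add: lp_norm_le_iff)
qed

lemma infsum_Plus:
  "(\<Sum>\<^sub>\<infinity>e\<in>A <+> B. f e) = (\<Sum>\<^sub>\<infinity>i\<in>A. f (Inl i)) + (\<Sum>\<^sub>\<infinity>j\<in>B. f (Inr j) :: ennreal)"
proof -
  have "A <+> B = Inl ` A \<union> Inr ` B"
    by (auto simp: Plus_def)
  then have "(\<Sum>\<^sub>\<infinity>e\<in>A <+> B. f e) = (\<Sum>\<^sub>\<infinity>e\<in>Inl ` A. f e) + (\<Sum>\<^sub>\<infinity>e\<in>Inr ` B. f e)"
    by (simp only:) (rule infsum_Un_disjoint, auto)
  then show ?thesis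
    by (simp add: infsum_reindex o_def)
qed

section \<open>Matchings and the Wasserstein distance\<close>

lemma Inl_in_Plus_iff [simp]: "Inl a \<in> A <+> B \<longleftrightarrow> a \<in> A"
  and Inr_in_Plus_iff [simp]: "Inr b \<in> A <+> B \<longleftrightarrow> b \<in> B"
  by auto

lemma inj_on_case_sum:
  assumes "inj_on f A" "inj_on g B" "f ` A \<inter> g ` B = {}"
  shows "inj_on (case_sum f g) (A <+> B)"
proof (rule inj_onI)
  fix x y assume "x \<in> A <+> B" "y \<in> A <+> B" "case_sum f g x = case_sum f g y"
  then show "x = y"
    using assms(3) inj_onD[OF assms(1)] inj_onD[OF assms(2)] by (elim PlusE) (simp_all, blast+)
qed

lemma emetric_on_triangle:
  "emetric_on X d \<Longrightarrow> x \<in> X \<Longrightarrow> y \<in> X \<Longrightarrow> z \<in> X \<Longrightarrow> d x z \<le> d x y + d y z"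
  by (simp add: emetric_on_def)

lemma emetric_on_sym: "emetric_on X d \<Longrightarrow> x \<in> X \<Longrightarrow> y \<in> X \<Longrightarrow> d x y = d y x"
  by (simp add: emetric_on_def)

lemma emetric_on_refl: "emetric_on X d \<Longrightarrow> x \<in> X \<Longrightarrow> d x x = 0"
  by (simp add: emetric_on_def)

lemma fs_idx_restrict [simp]: "fs_idx (fs_restrict \<alpha> S) = {i \<in> fs_idx \<alpha>. fst i \<in> S}"
  by (auto simp: fs_idx_def fs_restrict_def split: if_splits)

lemma Dbar_fs_idx:
  assumes "\<alpha> \<in> Dbar X A" "i \<in> fs_idx \<alpha>"
  shows "fst i \<in> X" "fst i \<notin> A"
proof -
  have "\<alpha> (fst i) \<noteq> 0"
    using assms(2) by (cases i) (auto simp: fs_idx_def)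
  then show "fst i \<in> X" "fst i \<notin> A"
    using assms(1) by (auto simp: Dbar_def)
qed

lemma countable_fs_idx:
  assumes "\<alpha> \<in> Dbar X A"
  shows "countable (fs_idx \<alpha>)"
proof (rule countable_subset)
  show "fs_idx \<alpha> \<subseteq> {x. \<alpha> x \<noteq> 0} \<times> UNIV"
    by (auto simp: fs_idx_def)
  show "countable ({x. \<alpha> x \<noteq> 0} \<times> (UNIV :: nat set))"
    using assms by (simp add: Dbar_def)
qed

text \<open>The distances paired by a matching, as one family on the disjoint union of the two index
  sets; a matched pair is recorded at the index of its first point.\<close>
definition matching_dist :: "('a \<Rightarrow> 'a \<Rightarrow> ennreal) \<Rightarrow> ('a \<times> nat) set \<Rightarrow> ('a \<times> nat \<Rightarrow> 'a \<times> nat) \<Rightarrow>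
    ('a \<times> nat \<Rightarrow> 'a) \<Rightarrow> ('a \<times> nat \<Rightarrow> 'a) \<Rightarrow> ('a \<times> nat) + ('a \<times> nat) \<Rightarrow> ennreal" where
  "matching_dist d K \<phi> z w e = (case e of
      Inl i \<Rightarrow> if i \<in> K then d (fst i) (fst (\<phi> i)) else d (fst i) (z i)
    | Inr j \<Rightarrow> if j \<in> \<phi> ` K then 0 else d (w j) (fst j))"

lemma matching_dist_simps [simp]:
  "matching_dist d K \<phi> z w (Inl i) = (if i \<in> K then d (fst i) (fst (\<phi> i)) else d (fst i) (z i))"
  "matching_dist d K \<phi> z w (Inr j) = (if j \<in> \<phi> ` K then 0 else d (w j) (fst j))"
  by (simp_all add: matching_dist_def)

lemma matching_cost_eq_lp_norm:
  assumes "is_matching A \<alpha> \<beta> K \<phi> z w"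
  shows "matching_cost d p \<alpha> \<beta> K \<phi> z w = lp_norm p (fs_idx \<alpha> <+> fs_idx \<beta>) (matching_dist d K \<phi> z w)"
proof -
  let ?f = "\<lambda>e. epowr (matching_dist d K \<phi> z w e) p"
  have "fs_idx \<alpha> = K \<union> (fs_idx \<alpha> - K)"
    using assms by (auto simp: is_matching_def)
  then have "(\<Sum>\<^sub>\<infinity>i\<in>fs_idx \<alpha>. ?f (Inl i)) = (\<Sum>\<^sub>\<infinity>i\<in>K. ?f (Inl i)) + (\<Sum>\<^sub>\<infinity>i\<in>fs_idx \<alpha> - K. ?f (Inl i))"
    by (metis Diff_disjoint ennreal_summable_on infsum_Un_disjoint)
  also have "\<dots> = (\<Sum>\<^sub>\<infinity>k\<in>K. epowr (d (fst k) (fst (\<phi> k))) p) + (\<Sum>\<^sub>\<infinity>i\<in>fs_idx \<alpha> - K. epowr (d (fst i) (z i)) p)"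
    by (intro arg_cong2[where f = "(+)"] infsum_cong) auto
  finally have "(\<Sum>\<^sub>\<infinity>i\<in>fs_idx \<alpha>. ?f (Inl i)) = \<dots>" .
  moreover have "(\<Sum>\<^sub>\<infinity>j\<in>fs_idx \<beta>. ?f (Inr j)) = (\<Sum>\<^sub>\<infinity>j\<in>fs_idx \<beta> - \<phi> ` K. epowr (d (w j) (fst j)) p)"
    by (rule infsum_cong_neutral) auto
  ultimately show ?thesis
    unfolding matching_cost_def lp_norm_def infsum_Plus by simp
qed

lemma Wp_le_matching_cost:
  "is_matching A \<alpha> \<beta> K \<phi> z w \<Longrightarrow> Wp d A p \<alpha> \<beta> \<le> matching_cost d p \<alpha> \<beta> K \<phi> z w"
  unfolding Wp_def by (rule INF_lower2[of "(K, \<phi>, z, w)"]) auto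

lemma Wp_lessE:
  assumes "Wp d A p \<alpha> \<beta> < c"
  obtains K \<phi> z w where "is_matching A \<alpha> \<beta> K \<phi> z w" "matching_cost d p \<alpha> \<beta> K \<phi> z w < c"
  using assms unfolding Wp_def INF_less_iff by auto

lemma le_WpI:
  assumes "\<And>K \<phi> z w. is_matching A \<alpha> \<beta> K \<phi> z w \<Longrightarrow> c \<le> matching_cost d p \<alpha> \<beta> K \<phi> z w"
  shows "c \<le> Wp d A p \<alpha> \<beta>"
  unfolding Wp_def using assms by (auto intro!: INF_greatest)

locale matching_composition =
  fixes X :: "'a set" and d :: "'a \<Rightarrow> 'a \<Rightarrow> ennreal" and A :: "'a set"
    and \<alpha> \<beta> \<gamma> :: "'a fsum"
    and K1 :: "('a \<times> nat) set" and \<phi>1 :: "'a \<times> nat \<Rightarrow> 'a \<times> nat" and z1 w1 :: "'a \<times> nat \<Rightarrow> 'a"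
    and K2 :: "('a \<times> nat) set" and \<phi>2 :: "'a \<times> nat \<Rightarrow> 'a \<times> nat" and z2 w2 :: "'a \<times> nat \<Rightarrow> 'a"
  assumes emetric: "emetric_on X d" and A_subset: "A \<subseteq> X"
    and Dbar: "\<alpha> \<in> Dbar X A" "\<beta> \<in> Dbar X A" "\<gamma> \<in> Dbar X A"
    and M1: "is_matching A \<alpha> \<beta> K1 \<phi>1 z1 w1" and M2: "is_matching A \<beta> \<gamma> K2 \<phi>2 z2 w2"
begin

abbreviation "I\<alpha> \<equiv> fs_idx \<alpha>"
abbreviation "I\<beta> \<equiv> fs_idx \<beta>"
abbreviation "I\<gamma> \<equiv> fs_idx \<gamma>"

definition "\<psi> = inv_into K2 \<phi>2"
definition "comp_K = {i \<in> K1. \<phi>1 i \<in> K2}"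
definition "comp_\<phi> = \<phi>2 \<circ> \<phi>1"
definition "comp_z i = (if i \<in> K1 then z2 (\<phi>1 i) else z1 i)"
definition "comp_w j = (if j \<in> \<phi>2 ` K2 then w1 (\<psi> j) else w2 j)"

lemma M1D: "K1 \<subseteq> I\<alpha>" "inj_on \<phi>1 K1" "\<phi>1 ` K1 \<subseteq> I\<beta>" "z1 ` (I\<alpha> - K1) \<subseteq> A" "w1 ` (I\<beta> - \<phi>1 ` K1) \<subseteq> A"
  using M1 by (auto simp: is_matching_def)

lemma M2D: "K2 \<subseteq> I\<beta>" "inj_on \<phi>2 K2" "\<phi>2 ` K2 \<subseteq> I\<gamma>" "z2 ` (I\<beta> - K2) \<subseteq> A" "w2 ` (I\<gamma> - \<phi>2 ` K2) \<subseteq> A"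
  using M2 by (auto simp: is_matching_def)

lemma \<psi>_in_K2: "j \<in> \<phi>2 ` K2 \<Longrightarrow> \<psi> j \<in> K2"
  and \<phi>2_\<psi>: "j \<in> \<phi>2 ` K2 \<Longrightarrow> \<phi>2 (\<psi> j) = j"
  and \<psi>_\<phi>2: "k \<in> K2 \<Longrightarrow> \<psi> (\<phi>2 k) = k"
  and \<psi>_in_I\<beta>: "j \<in> \<phi>2 ` K2 \<Longrightarrow> \<psi> j \<in> I\<beta>"
  using M2D(1,2) inv_into_into[of j \<phi>2 K2] by (auto simp: \<psi>_def f_inv_into_f)

lemma inj_on_\<psi>: "B \<subseteq> \<phi>2 ` K2 \<Longrightarrow> inj_on \<psi> B"
  by (simp add: \<psi>_def inj_on_inv_into)

lemma in_comp_image_iff: "j \<in> comp_\<phi> ` comp_K \<longleftrightarrow> j \<in> \<phi>2 ` K2 \<and> \<psi> j \<in> \<phi>1 ` K1"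
proof
  assume "j \<in> comp_\<phi> ` comp_K"
  then obtain i where "i \<in> K1" "\<phi>1 i \<in> K2" "j = \<phi>2 (\<phi>1 i)"
    by (auto simp: comp_K_def comp_\<phi>_def)
  then show "j \<in> \<phi>2 ` K2 \<and> \<psi> j \<in> \<phi>1 ` K1"
    using \<psi>_\<phi>2 by auto
next
  assume "j \<in> \<phi>2 ` K2 \<and> \<psi> j \<in> \<phi>1 ` K1"
  then obtain i where "i \<in> K1" "\<psi> j = \<phi>1 i" "j \<in> \<phi>2 ` K2"
    by auto
  then show "j \<in> comp_\<phi> ` comp_K"
    using \<psi>_in_K2[of j] \<phi>2_\<psi>[of j] unfolding comp_K_def comp_\<phi>_def
    by (metis (mono_tags, lifting) comp_apply image_eqI mem_Collect_eq)
qed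

lemma comp_is_matching: "is_matching A \<alpha> \<gamma> comp_K comp_\<phi> comp_z comp_w"
  unfolding is_matching_def
proof (intro conjI)
  show "comp_K \<subseteq> I\<alpha>" "inj_on comp_\<phi> comp_K" "comp_\<phi> ` comp_K \<subseteq> I\<gamma>"
    using M1D M2D by (auto simp: comp_K_def comp_\<phi>_def inj_on_def)
  show "comp_z ` (I\<alpha> - comp_K) \<subseteq> A"
    using M1D M2D by (auto simp: comp_z_def comp_K_def image_subset_iff)
  show "comp_w ` (I\<gamma> - comp_\<phi> ` comp_K) \<subseteq> A"
    using M1D M2D \<psi>_in_K2 \<psi>_in_I\<beta> by (auto simp: comp_w_def in_comp_image_iff image_subset_iff)
qed

abbreviation "c1 \<equiv> matching_dist d K1 \<phi>1 z1 w1"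
abbreviation "c2 \<equiv> matching_dist d K2 \<phi>2 z2 w2"
abbreviation "c \<equiv> matching_dist d comp_K comp_\<phi> comp_z comp_w"

text \<open>By the triangle inequality each composed distance is at most a distance of the first
  matching plus one of the second; \<open>h1\<close> and \<open>h2\<close> pick these out, and they are injective, so
  the two parts reindex into the cost families of the given matchings.\<close>
definition "S1 = I\<alpha> <+> {j \<in> I\<gamma>. j \<in> \<phi>2 ` K2 \<and> \<psi> j \<notin> \<phi>1 ` K1}"
definition "h1 = case_sum Inl (Inr \<circ> \<psi>)"
definition "S2 = K1 <+> {j \<in> I\<gamma>. j \<notin> \<phi>2 ` K2 \<or> \<psi> j \<notin> \<phi>1 ` K1}"
definition "h2 = case_sum (Inl \<circ> \<phi>1) (\<lambda>j. if j \<in> \<phi>2 ` K2 then Inl (\<psi> j) else Inr j)"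

lemma comp_dist_Inl_le:
  assumes "i \<in> I\<alpha>"
  shows "c (Inl i) \<le> (if Inl i \<in> S1 then c1 (h1 (Inl i)) else 0) + (if Inl i \<in> S2 then c2 (h2 (Inl i)) else 0)"
proof -
  have "fst i \<in> X"
    using assms Dbar_fs_idx[OF Dbar(1)] by blast
  consider "i \<in> K1" "\<phi>1 i \<in> K2" | "i \<in> K1" "\<phi>1 i \<notin> K2" | "i \<notin> K1"
    by blast
  then show ?thesis
  proof cases
    case 1
    then have "\<phi>1 i \<in> I\<beta>" "\<phi>2 (\<phi>1 i) \<in> I\<gamma>"
      using M1D M2D by blast+
    then have "fst (\<phi>1 i) \<in> X" "fst (\<phi>2 (\<phi>1 i)) \<in> X"
      using Dbar_fs_idx[OF Dbar(2)] Dbar_fs_idx[OF Dbar(3)] by blast+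
    with 1 show ?thesis
      using assms \<open>fst i \<in> X\<close> emetric_on_triangle[OF emetric]
      by (simp add: S1_def h1_def S2_def h2_def comp_K_def comp_\<phi>_def)
  next
    case 2
    then have "\<phi>1 i \<in> I\<beta> - K2"
      using M1D by blast
    then have "fst (\<phi>1 i) \<in> X" "z2 (\<phi>1 i) \<in> X"
      using M2D Dbar_fs_idx[OF Dbar(2)] A_subset by blast+
    with 2 show ?thesis
      using assms \<open>fst i \<in> X\<close> emetric_on_triangle[OF emetric]
      by (simp add: S1_def h1_def S2_def h2_def comp_K_def comp_z_def)
  next
    case 3
    then show ?thesis
      using assms \<open>fst i \<in> X\<close> by (simp add: S1_def h1_def S2_def comp_K_def comp_z_def)
  qed
qed

lemma comp_dist_Inr_le:
  assumes "j \<in> I\<gamma>"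
  shows "c (Inr j) \<le> (if Inr j \<in> S1 then c1 (h1 (Inr j)) else 0) + (if Inr j \<in> S2 then c2 (h2 (Inr j)) else 0)"
proof -
  have "fst j \<in> X"
    using assms Dbar_fs_idx[OF Dbar(3)] by blast
  consider "j \<in> comp_\<phi> ` comp_K" | "j \<in> \<phi>2 ` K2" "\<psi> j \<notin> \<phi>1 ` K1" | "j \<notin> \<phi>2 ` K2"
    using in_comp_image_iff by blast
  then show ?thesis
  proof cases
    case 1
    then show ?thesis by simp
  next
    case 2
    then have "\<psi> j \<in> I\<beta> - \<phi>1 ` K1"
      using \<psi>_in_K2 M2D by blast
    then have "fst (\<psi> j) \<in> X" "w1 (\<psi> j) \<in> X"
      using M1D Dbar_fs_idx[OF Dbar(2)] A_subset by blast+
    with 2 show ?thesis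
      using assms \<open>fst j \<in> X\<close> \<psi>_in_K2 \<phi>2_\<psi> emetric_on_triangle[OF emetric] in_comp_image_iff
      by (simp add: S1_def h1_def S2_def h2_def comp_w_def)
  next
    case 3
    then show ?thesis
      using assms in_comp_image_iff by (simp add: S1_def S2_def h2_def comp_w_def)
  qed
qed

lemma comp_dist_le:
  "e \<in> I\<alpha> <+> I\<gamma> \<Longrightarrow> c e \<le> (if e \<in> S1 then c1 (h1 e) else 0) + (if e \<in> S2 then c2 (h2 e) else 0)"
  by (elim PlusE) (hypsubst, rule comp_dist_Inl_le comp_dist_Inr_le, assumption)+

lemma h1_image: "h1 ` S1 \<subseteq> I\<alpha> <+> I\<beta>"
proof (rule image_subsetI)
  show "h1 e \<in> I\<alpha> <+> I\<beta>" if "e \<in> S1" for e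
    using that \<psi>_in_I\<beta> by (cases e) (simp_all add: S1_def h1_def)
qed

lemma inj_on_h1: "inj_on h1 S1"
  unfolding S1_def h1_def by (intro inj_on_case_sum comp_inj_on inj_on_\<psi>) auto

lemma h2_image: "h2 ` S2 \<subseteq> I\<beta> <+> I\<gamma>"
proof (rule image_subsetI)
  fix e assume "e \<in> S2"
  then consider i where "e = Inl i" "i \<in> K1" | j where "e = Inr j" "j \<in> I\<gamma>"
    by (auto simp: S2_def)
  then show "h2 e \<in> I\<beta> <+> I\<gamma>"
  proof cases
    case 1
    then show ?thesis
      using M1D(3) by (simp add: h2_def image_subset_iff)
  next
    case 2
    then show ?thesis
      using \<psi>_in_I\<beta>[of j] by (simp add: h2_def)
  qed
qed

lemma inj_on_h2: "inj_on h2 S2"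
proof -
  let ?g = "\<lambda>j. if j \<in> \<phi>2 ` K2 then Inl (\<psi> j) else Inr j"
  have "inj_on ?g B" for B
  proof (rule inj_onI)
    fix x y assume "?g x = ?g y"
    then show "x = y"
      using inj_onD[OF inj_on_\<psi>[OF order_refl]] by (simp split: if_splits)
  qed
  moreover have "(Inl \<circ> \<phi>1) ` K1 \<inter> ?g ` {j \<in> I\<gamma>. j \<notin> \<phi>2 ` K2 \<or> \<psi> j \<notin> \<phi>1 ` K1} = {}"
  proof -
    have "(Inl \<circ> \<phi>1) i \<noteq> ?g j" if "i \<in> K1" "j \<notin> \<phi>2 ` K2 \<or> \<psi> j \<notin> \<phi>1 ` K1" for i j
      using that by (metis comp_apply image_eqI sum.distinct(1) sum.inject(1))
    then show ?thesis
      by blast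
  qed
  moreover have "inj_on (Inl \<circ> \<phi>1) K1"
    using M1D(2) by (simp add: comp_inj_on)
  ultimately show ?thesis
    unfolding S2_def h2_def by (intro inj_on_case_sum)
qed

lemma comp_cost_le:
  assumes "p \<ge> 1"
  shows "matching_cost d p \<alpha> \<gamma> comp_K comp_\<phi> comp_z comp_w
           \<le> matching_cost d p \<alpha> \<beta> K1 \<phi>1 z1 w1 + matching_cost d p \<beta> \<gamma> K2 \<phi>2 z2 w2"
proof -
  have p: "p > 0" using assms by simp
  have first: "lp_norm p (I\<alpha> <+> I\<gamma>) (\<lambda>e. if e \<in> S1 then c1 (h1 e) else 0) \<le> lp_norm p (I\<alpha> <+> I\<beta>) c1"
    by (rule lp_norm_reindex[OF p _ inj_on_h1 h1_image]) (auto simp: S1_def)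
  have second: "lp_norm p (I\<alpha> <+> I\<gamma>) (\<lambda>e. if e \<in> S2 then c2 (h2 e) else 0) \<le> lp_norm p (I\<beta> <+> I\<gamma>) c2"
    by (rule lp_norm_reindex[OF p _ inj_on_h2 h2_image]) (use M1D(1) in \<open>auto simp: S2_def\<close>)
  have "lp_norm p (I\<alpha> <+> I\<gamma>) c \<le> lp_norm p (I\<alpha> <+> I\<gamma>)
          (\<lambda>e. (if e \<in> S1 then c1 (h1 e) else 0) + (if e \<in> S2 then c2 (h2 e) else 0))"
    by (rule lp_norm_mono[OF p]) (rule comp_dist_le)
  also have "\<dots> \<le> lp_norm p (I\<alpha> <+> I\<beta>) c1 + lp_norm p (I\<beta> <+> I\<gamma>) c2"
    using lp_norm_add_le[OF assms] add_mono[OF first second] by (rule order_trans)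
  finally show ?thesis
    unfolding matching_cost_eq_lp_norm[OF comp_is_matching] matching_cost_eq_lp_norm[OF M1]
      matching_cost_eq_lp_norm[OF M2] .
qed

end

lemma matching_compose:
  assumes "emetric_on X d" "A \<subseteq> X" "p \<ge> 1" "\<alpha> \<in> Dbar X A" "\<beta> \<in> Dbar X A" "\<gamma> \<in> Dbar X A"
    and "is_matching A \<alpha> \<beta> K1 \<phi>1 z1 w1" "is_matching A \<beta> \<gamma> K2 \<phi>2 z2 w2"
  obtains K \<phi> z w where "is_matching A \<alpha> \<gamma> K \<phi> z w"
    "matching_cost d p \<alpha> \<gamma> K \<phi> z w
       \<le> matching_cost d p \<alpha> \<beta> K1 \<phi>1 z1 w1 + matching_cost d p \<beta> \<gamma> K2 \<phi>2 z2 w2"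
proof -
  interpret matching_composition X d A \<alpha> \<beta> \<gamma> K1 \<phi>1 z1 w1 K2 \<phi>2 z2 w2
    using assms by unfold_locales
  show ?thesis
    by (rule that[OF comp_is_matching comp_cost_le[OF assms(3)]])
qed

lemma ennreal_less_add_real:
  assumes "x < top" "e > 0"
  shows "x < x + ennreal e"
  using assms by (cases x rule: ennreal_cases) (auto simp: ennreal_less_iff simp flip: ennreal_plus)

lemma Wp_triangle:
  assumes "emetric_on X d" "A \<subseteq> X" "p \<ge> 1" "\<alpha> \<in> Dbar X A" "\<beta> \<in> Dbar X A" "\<gamma> \<in> Dbar X A"
  shows "Wp d A p \<alpha> \<gamma> \<le> Wp d A p \<alpha> \<beta> + Wp d A p \<beta> \<gamma>"
proof (rule ennreal_le_epsilon)
  fix e :: real assume fin: "Wp d A p \<alpha> \<beta> + Wp d A p \<beta> \<gamma> < top" and e: "0 < e"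
  then have "Wp d A p \<alpha> \<beta> < Wp d A p \<alpha> \<beta> + ennreal (e/2)"
    "Wp d A p \<beta> \<gamma> < Wp d A p \<beta> \<gamma> + ennreal (e/2)"
    by (auto intro!: ennreal_less_add_real simp: top_unique)
  then obtain K1 \<phi>1 z1 w1 K2 \<phi>2 z2 w2 where
    M1: "is_matching A \<alpha> \<beta> K1 \<phi>1 z1 w1" "matching_cost d p \<alpha> \<beta> K1 \<phi>1 z1 w1 < Wp d A p \<alpha> \<beta> + ennreal (e/2)" and
    M2: "is_matching A \<beta> \<gamma> K2 \<phi>2 z2 w2" "matching_cost d p \<beta> \<gamma> K2 \<phi>2 z2 w2 < Wp d A p \<beta> \<gamma> + ennreal (e/2)"
    by (elim Wp_lessE)
  obtain K \<phi> z w where M: "is_matching A \<alpha> \<gamma> K \<phi> z w"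
    "matching_cost d p \<alpha> \<gamma> K \<phi> z w \<le> matching_cost d p \<alpha> \<beta> K1 \<phi>1 z1 w1 + matching_cost d p \<beta> \<gamma> K2 \<phi>2 z2 w2"
    using matching_compose[OF assms M1(1) M2(1)] .
  have "Wp d A p \<alpha> \<gamma> \<le> matching_cost d p \<alpha> \<gamma> K \<phi> z w"
    by (rule Wp_le_matching_cost[OF M(1)])
  also have "\<dots> \<le> (Wp d A p \<alpha> \<beta> + ennreal (e/2)) + (Wp d A p \<beta> \<gamma> + ennreal (e/2))"
    using M(2) M1(2) M2(2) by (meson add_mono less_imp_le order_trans)
  also have "\<dots> = Wp d A p \<alpha> \<beta> + Wp d A p \<beta> \<gamma> + ennreal e"
    using e by (simp add: add_ac flip: ennreal_plus)
  finally show "Wp d A p \<alpha> \<gamma> \<le> Wp d A p \<alpha> \<beta> + Wp d A p \<beta> \<gamma> + ennreal e" .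
qed

lemma is_matching_swap:
  assumes "is_matching A \<alpha> \<beta> K \<phi> z w"
  shows "is_matching A \<beta> \<alpha> (\<phi> ` K) (inv_into K \<phi>) w z"
  using assms by (auto simp: is_matching_def inj_on_inv_into)

lemma infsum_emetric_sym:
  assumes "emetric_on X d" "\<And>i. i \<in> S \<Longrightarrow> f i \<in> X" "\<And>i. i \<in> S \<Longrightarrow> g i \<in> X"
  shows "(\<Sum>\<^sub>\<infinity>i\<in>S. epowr (d (f i) (g i)) p) = (\<Sum>\<^sub>\<infinity>i\<in>S. epowr (d (g i) (f i)) p)"
  using emetric_on_sym[OF assms(1)] assms(2,3) by (intro infsum_cong) simp

lemma matching_cost_swap:
  assumes "emetric_on X d" "A \<subseteq> X" "\<alpha> \<in> Dbar X A" "\<beta> \<in> Dbar X A"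
    and M: "is_matching A \<alpha> \<beta> K \<phi> z w"
  shows "matching_cost d p \<beta> \<alpha> (\<phi> ` K) (inv_into K \<phi>) w z = matching_cost d p \<alpha> \<beta> K \<phi> z w"
proof -
  have M': "K \<subseteq> fs_idx \<alpha>" "inj_on \<phi> K" "\<phi> ` K \<subseteq> fs_idx \<beta>" "z ` (fs_idx \<alpha> - K) \<subseteq> A"
    "w ` (fs_idx \<beta> - \<phi> ` K) \<subseteq> A"
    using M by (auto simp: is_matching_def)
  have X: "i \<in> fs_idx \<alpha> \<Longrightarrow> fst i \<in> X" "j \<in> fs_idx \<beta> \<Longrightarrow> fst j \<in> X" for i j
    using Dbar_fs_idx assms(3,4) by blast+
  have "(\<Sum>\<^sub>\<infinity>j\<in>\<phi> ` K. epowr (d (fst j) (fst (inv_into K \<phi> j))) p)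
      = (\<Sum>\<^sub>\<infinity>k\<in>K. epowr (d (fst (\<phi> k)) (fst k)) p)"
    using M'(2) by (simp add: infsum_reindex o_def cong: infsum_cong)
  also have "\<dots> = (\<Sum>\<^sub>\<infinity>k\<in>K. epowr (d (fst k) (fst (\<phi> k))) p)"
    using M'(1,3) X by (intro infsum_emetric_sym[OF assms(1)]) blast+
  finally have "(\<Sum>\<^sub>\<infinity>j\<in>\<phi> ` K. epowr (d (fst j) (fst (inv_into K \<phi> j))) p)
      = (\<Sum>\<^sub>\<infinity>k\<in>K. epowr (d (fst k) (fst (\<phi> k))) p)" .
  moreover have "(\<Sum>\<^sub>\<infinity>j\<in>fs_idx \<beta> - \<phi> ` K. epowr (d (fst j) (w j)) p)
      = (\<Sum>\<^sub>\<infinity>j\<in>fs_idx \<beta> - \<phi> ` K. epowr (d (w j) (fst j)) p)"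
    using M'(5) X assms(2) by (intro infsum_emetric_sym[OF assms(1)]) blast+
  moreover have "(\<Sum>\<^sub>\<infinity>i\<in>fs_idx \<alpha> - K. epowr (d (z i) (fst i)) p)
      = (\<Sum>\<^sub>\<infinity>i\<in>fs_idx \<alpha> - K. epowr (d (fst i) (z i)) p)"
    using M'(4) X assms(2) by (intro infsum_emetric_sym[OF assms(1)]) blast+
  moreover have "inv_into K \<phi> ` \<phi> ` K = K"
    using M'(2) by simp
  ultimately show ?thesis
    unfolding matching_cost_def by (simp add: add_ac)
qed

lemma Wp_sym:
  assumes "emetric_on X d" "A \<subseteq> X" "\<alpha> \<in> Dbar X A" "\<beta> \<in> Dbar X A"
  shows "Wp d A p \<alpha> \<beta> = Wp d A p \<beta> \<alpha>"
proof -
  have "Wp d A p \<beta> \<alpha> \<le> Wp d A p \<alpha> \<beta>" if "\<alpha> \<in> Dbar X A" "\<beta> \<in> Dbar X A" for \<alpha> \<beta>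
  proof (rule le_WpI)
    fix K \<phi> z w assume M: "is_matching A \<alpha> \<beta> K \<phi> z w"
    have "Wp d A p \<beta> \<alpha> \<le> matching_cost d p \<beta> \<alpha> (\<phi> ` K) (inv_into K \<phi>) w z"
      by (rule Wp_le_matching_cost[OF is_matching_swap[OF M]])
    also have "\<dots> = matching_cost d p \<alpha> \<beta> K \<phi> z w"
      by (rule matching_cost_swap[OF assms(1,2) that M])
    finally show "Wp d A p \<beta> \<alpha> \<le> matching_cost d p \<alpha> \<beta> K \<phi> z w" .
  qed
  then show ?thesis
    using assms(3,4) by (metis antisym)
qed


section \<open>Diagrams at finite distance from Dbar_p\<close>

lemma einfdist_le: "a \<in> A \<Longrightarrow> einfdist d x A \<le> d x a"
  unfolding einfdist_def by (rule INF_lower)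

lemma einfdist_triangle:
  assumes "emetric_on X d" "A \<subseteq> X" "x \<in> X" "y \<in> X"
  shows "einfdist d x A \<le> d x y + einfdist d y A"
proof (rule ennreal_le_epsilon)
  fix e :: real assume fin: "d x y + einfdist d y A < top" and e: "0 < e"
  then have "einfdist d y A < einfdist d y A + ennreal e"
    by (intro ennreal_less_add_real) (auto simp: top_unique)
  then obtain a where a: "a \<in> A" "d y a < einfdist d y A + ennreal e"
    unfolding einfdist_def INF_less_iff by auto
  have "einfdist d x A \<le> d x y + d y a"
    using einfdist_le[OF a(1)] emetric_on_triangle[OF assms(1,3,4)] a(1) assms(2) by (meson order_trans subsetD)
  also have "\<dots> \<le> d x y + einfdist d y A + ennreal e"
    using a(2) by (simp add: add.assoc add_left_mono)
  finally show "einfdist d x A \<le> d x y + einfdist d y A + ennreal e" .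
qed

lemma fs_idx_lower_part:
  "\<alpha> \<in> Dbar X A \<Longrightarrow> fs_idx (lower_part X d A top \<alpha>) = {i \<in> fs_idx \<alpha>. einfdist d (fst i) A < top}"
  using Dbar_fs_idx[of \<alpha> X A] by (auto simp: lower_part_def nbhd_def)

lemma fs_idx_upper_part:
  "\<alpha> \<in> Dbar X A \<Longrightarrow> fs_idx (upper_part X d A top \<alpha>) = {i \<in> fs_idx \<alpha>. einfdist d (fst i) A = top}"
  using Dbar_fs_idx[of \<alpha> X A] by (auto simp: upper_part_def nbhd_def simp flip: less_top)

lemma fs_restrict_Dbar: "\<alpha> \<in> Dbar X A \<Longrightarrow> fs_restrict \<alpha> S \<in> Dbar X A"
  by (auto simp: Dbar_def fs_restrict_def elim: countable_subset[rotated])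

lemma fs_zero_Dbar: "fs_zero \<in> Dbar X A"
  by (simp add: Dbar_def fs_zero_def)

lemma matching_dist_less_top:
  assumes "is_matching A \<alpha> \<beta> K \<phi> z w" "p > 0" "matching_cost d p \<alpha> \<beta> K \<phi> z w < top"
    and "e \<in> fs_idx \<alpha> <+> fs_idx \<beta>"
  shows "matching_dist d K \<phi> z w e < top"
  using le_lp_norm[OF assms(2,4), of "matching_dist d K \<phi> z w"] assms(3)
  unfolding matching_cost_eq_lp_norm[OF assms(1)] by simp

lemma einfdist_less_top: "d x a < top \<Longrightarrow> a \<in> A \<Longrightarrow> einfdist d x A < top"
  using einfdist_le[of a A d x] le_less_trans by blast

lemma finite_cost_matching_einfdist:
  assumes "emetric_on X d" "A \<subseteq> X" "\<alpha> \<in> Dbar X A" "\<beta> \<in> Dbar X A" "p > 0"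
    and M: "is_matching A \<alpha> \<beta> K \<phi> z w" and fin: "matching_cost d p \<alpha> \<beta> K \<phi> z w < top"
  shows "i \<in> K \<Longrightarrow> einfdist d (fst i) A < top \<longleftrightarrow> einfdist d (fst (\<phi> i)) A < top"
    and "i \<in> fs_idx \<alpha> - K \<Longrightarrow> einfdist d (fst i) A < top"
    and "j \<in> fs_idx \<beta> - \<phi> ` K \<Longrightarrow> einfdist d (fst j) A < top"
proof -
  have M': "K \<subseteq> fs_idx \<alpha>" "\<phi> ` K \<subseteq> fs_idx \<beta>" "z ` (fs_idx \<alpha> - K) \<subseteq> A"
    "w ` (fs_idx \<beta> - \<phi> ` K) \<subseteq> A"
    using M by (auto simp: is_matching_def)
  note entry = matching_dist_less_top[OF M assms(5) fin]
  have X\<alpha>: "fst i \<in> X" if "i \<in> fs_idx \<alpha>" for i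
    using Dbar_fs_idx[OF assms(3) that] by simp
  have X\<beta>: "fst j \<in> X" if "j \<in> fs_idx \<beta>" for j
    using Dbar_fs_idx[OF assms(4) that] by simp
  show "einfdist d (fst i) A < top \<longleftrightarrow> einfdist d (fst (\<phi> i)) A < top" if "i \<in> K"
  proof -
    have "i \<in> fs_idx \<alpha>" "\<phi> i \<in> fs_idx \<beta>"
      using that M'(1,2) by blast+
    then have i: "fst i \<in> X" "fst (\<phi> i) \<in> X"
      using X\<alpha> X\<beta> by blast+
    have "d (fst i) (fst (\<phi> i)) < top"
      using entry[of "Inl i"] that M'(1) by auto
    moreover have "d (fst (\<phi> i)) (fst i) = d (fst i) (fst (\<phi> i))"
      using emetric_on_sym[OF assms(1) i(2,1)] .
    ultimately show ?thesis
      using einfdist_triangle[OF assms(1,2) i] einfdist_triangle[OF assms(1,2) i(2,1)]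
      by (metis ennreal_add_less_top le_less_trans)
  qed
  show "einfdist d (fst i) A < top" if "i \<in> fs_idx \<alpha> - K"
    using einfdist_less_top[of d "fst i" "z i"] entry[of "Inl i"] that M'(3) by auto
  show "einfdist d (fst j) A < top" if "j \<in> fs_idx \<beta> - \<phi> ` K"
  proof -
    have "fst j \<in> X" "w j \<in> A" "d (w j) (fst j) < top"
      using that X\<beta> M'(4) entry[of "Inr j"] by auto
    then show ?thesis
      using einfdist_less_top[of d "fst j" "w j"] emetric_on_sym[OF assms(1)] assms(2) by auto
  qed
qed

lemma Wp_lower_part_le:
  assumes "emetric_on X d" "A \<subseteq> X" "\<alpha> \<in> Dbar X A" "\<beta> \<in> Dbar X A" "p > 0"
  shows "Wp d A p (lower_part X d A top \<alpha>) (lower_part X d A top \<beta>) \<le> Wp d A p \<alpha> \<beta>"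
proof (rule le_WpI)
  fix K \<phi> z w assume M: "is_matching A \<alpha> \<beta> K \<phi> z w"
  let ?l\<alpha> = "lower_part X d A top \<alpha>" and ?l\<beta> = "lower_part X d A top \<beta>"
  show "Wp d A p ?l\<alpha> ?l\<beta> \<le> matching_cost d p \<alpha> \<beta> K \<phi> z w"
  proof (cases "matching_cost d p \<alpha> \<beta> K \<phi> z w < top")
    case True
    note fin = finite_cost_matching_einfdist[OF assms M True]
    define K' where "K' = {i \<in> K. einfdist d (fst i) A < top}"
    have I\<alpha>: "fs_idx ?l\<alpha> = {i \<in> fs_idx \<alpha>. einfdist d (fst i) A < top}"
      and I\<beta>: "fs_idx ?l\<beta> = {j \<in> fs_idx \<beta>. einfdist d (fst j) A < top}"
      using fs_idx_lower_part assms(3,4) by blast+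
    have image_K': "j \<in> \<phi> ` K' \<longleftrightarrow> j \<in> \<phi> ` K" if "j \<in> fs_idx ?l\<beta>" for j
      using that fin(1) unfolding I\<beta> K'_def by blast
    have M': "is_matching A ?l\<alpha> ?l\<beta> K' \<phi> z w"
      using M fin(1) image_K' unfolding is_matching_def I\<alpha> I\<beta> K'_def
      by (auto intro: inj_on_subset)
    have "Wp d A p ?l\<alpha> ?l\<beta> \<le> lp_norm p (fs_idx ?l\<alpha> <+> fs_idx ?l\<beta>) (matching_dist d K' \<phi> z w)"
      using Wp_le_matching_cost[OF M'] by (simp add: matching_cost_eq_lp_norm[OF M'])
    also have "\<dots> = lp_norm p (fs_idx ?l\<alpha> <+> fs_idx ?l\<beta>) (matching_dist d K \<phi> z w)"
    proof (rule lp_norm_cong)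
      fix e assume "e \<in> fs_idx ?l\<alpha> <+> fs_idx ?l\<beta>"
      then show "matching_dist d K' \<phi> z w e = matching_dist d K \<phi> z w e"
        using image_K' by (auto simp: I\<alpha> K'_def)
    qed
    also have "\<dots> \<le> lp_norm p (fs_idx \<alpha> <+> fs_idx \<beta>) (matching_dist d K \<phi> z w)"
      using assms(5) by (rule lp_norm_subset) (auto simp: I\<alpha> I\<beta>)
    finally show ?thesis
      by (simp add: matching_cost_eq_lp_norm[OF M])
  qed (simp add: not_less top_unique)
qed

lemma finite_upper_part_if_Wp_finite:
  assumes "emetric_on X d" "A \<subseteq> X" "\<alpha> \<in> Dbar X A" "\<beta> \<in> Dbar X A" "p > 0"
    and "Wp d A p \<alpha> \<beta> < top" "finite (fs_idx (upper_part X d A top \<beta>))"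
  shows "finite (fs_idx (upper_part X d A top \<alpha>))"
proof -
  obtain K \<phi> z w where M: "is_matching A \<alpha> \<beta> K \<phi> z w" and fin: "matching_cost d p \<alpha> \<beta> K \<phi> z w < top"
    using assms(6) by (rule Wp_lessE)
  note fin = finite_cost_matching_einfdist[OF assms(1-5) M fin]
  have "fs_idx (upper_part X d A top \<alpha>) \<subseteq> \<phi> -` fs_idx (upper_part X d A top \<beta>) \<inter> K"
  proof
    fix i assume "i \<in> fs_idx (upper_part X d A top \<alpha>)"
    then have i: "i \<in> fs_idx \<alpha>" "\<not> einfdist d (fst i) A < top"
      unfolding fs_idx_upper_part[OF assms(3)] by auto
    then have "i \<in> K"
      using fin(2) by blast
    moreover have "\<phi> i \<in> fs_idx \<beta>"
      using M \<open>i \<in> K\<close> by (auto simp: is_matching_def)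
    ultimately show "i \<in> \<phi> -` fs_idx (upper_part X d A top \<beta>) \<inter> K"
      using fin(1) i(2) unfolding fs_idx_upper_part[OF assms(4)] by (simp flip: less_top)
  qed
  moreover have "finite (\<phi> -` fs_idx (upper_part X d A top \<beta>) \<inter> K)"
    using assms(7) M by (auto intro: finite_vimage_IntI simp: is_matching_def)
  ultimately show ?thesis
    by (rule finite_subset)
qed

lemma Dbar_p_if_Wp_finite:
  assumes "metric_pair X d A" "p \<ge> 1" "\<alpha> \<in> Dbar X A" "\<beta> \<in> Dbar_p X d A p"
    and "Wp d A p \<alpha> \<beta> < top"
  shows "\<alpha> \<in> Dbar_p X d A p"
proof -
  have em: "emetric_on X d" and AX: "A \<subseteq> X" and p: "p > 0"
    using assms(1,2) by (auto simp: metric_pair_def eclosed_in_def)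
  have \<beta>: "\<beta> \<in> Dbar X A" "finite (fs_idx (upper_part X d A top \<beta>))"
    "Wp d A p (lower_part X d A top \<beta>) fs_zero < top"
    using assms(4) by (auto simp: Dbar_p_def)
  let ?l\<alpha> = "lower_part X d A top \<alpha>" and ?l\<beta> = "lower_part X d A top \<beta>"
  have "?l\<alpha> \<in> Dbar X A" "?l\<beta> \<in> Dbar X A"
    using assms(3) \<beta>(1) by (simp_all add: lower_part_def fs_restrict_Dbar)
  then have "Wp d A p ?l\<alpha> fs_zero \<le> Wp d A p ?l\<alpha> ?l\<beta> + Wp d A p ?l\<beta> fs_zero"
    by (intro Wp_triangle[OF em AX assms(2)] fs_zero_Dbar)
  also have "\<dots> \<le> Wp d A p \<alpha> \<beta> + Wp d A p ?l\<beta> fs_zero"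
    using Wp_lower_part_le[OF em AX assms(3) \<beta>(1) p] by (rule add_right_mono)
  also have "\<dots> < top"
    using assms(5) \<beta>(3) by (simp add: ennreal_add_less_top)
  finally show ?thesis
    using finite_upper_part_if_Wp_finite[OF em AX assms(3) \<beta>(1) p assms(5) \<beta>(2)] assms(3)
    by (simp add: Dbar_p_def)
qed

section \<open>Formal sums of countable families\<close>

definition ecard :: "'a set \<Rightarrow> enat" where
  "ecard S = (if finite S then enat (card S) else \<infinity>)"

lemma bij_betw_to_nat_on_ecard:
  assumes "countable S"
  shows "bij_betw (to_nat_on S) S {k. enat k < ecard S}"
proof (cases "finite S")
  case True
  then have "{k. enat k < ecard S} = {..<card S}"
    by (auto simp: ecard_def)
  then show ?thesis
    using to_nat_on_finite[OF True] by simp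
qed (use to_nat_on_infinite[OF assms] in \<open>simp add: ecard_def\<close>)

definition fs_of_family :: "('t \<Rightarrow> 'a) \<Rightarrow> 't set \<Rightarrow> 'a fsum" where
  "fs_of_family f T = (\<lambda>y. ecard {t \<in> T. f t = y})"

definition family_index :: "('t \<Rightarrow> 'a) \<Rightarrow> 't set \<Rightarrow> 't \<Rightarrow> 'a \<times> nat" where
  "family_index f T t = (f t, to_nat_on {t' \<in> T. f t' = f t} t)"

lemma bij_betw_family_index:
  assumes "countable T"
  shows "bij_betw (family_index f T) T (fs_idx (fs_of_family f T))"
proof -
  define S where "S y = {t \<in> T. f t = y}" for y
  have bij: "bij_betw (to_nat_on (S y)) (S y) {k. enat k < ecard (S y)}" for y
    using assms by (intro bij_betw_to_nat_on_ecard) (auto simp: S_def intro: countable_subset)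
  have idx: "fs_idx (fs_of_family f T) = (SIGMA y:UNIV. {k. enat k < ecard (S y)})"
    by (auto simp: fs_idx_def fs_of_family_def S_def)
  have "family_index f T = (\<lambda>t. (f t, to_nat_on (S (f t)) t))"
    by (auto simp: family_index_def S_def)
  moreover have "bij_betw (\<lambda>t. (f t, to_nat_on (S (f t)) t)) T (SIGMA y:UNIV. {k. enat k < ecard (S y)})"
    unfolding bij_betw_def
  proof
    show "inj_on (\<lambda>t. (f t, to_nat_on (S (f t)) t)) T"
      using bij by (auto simp: inj_on_def bij_betw_def S_def)
    show "(\<lambda>t. (f t, to_nat_on (S (f t)) t)) ` T = (SIGMA y:UNIV. {k. enat k < ecard (S y)})"
    proof safe
      fix t assume "t \<in> T"
      then show "enat (to_nat_on (S (f t)) t) < ecard (S (f t))"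
        using bij[of "f t"] by (auto simp: bij_betw_def S_def)
    next
      fix y k assume "enat k < ecard (S y)"
      then have "k \<in> to_nat_on (S y) ` S y"
        using bij[of y] by (simp add: bij_betw_def)
      then obtain t where "t \<in> S y" "to_nat_on (S y) t = k"
        by blast
      then show "(y, k) \<in> (\<lambda>t. (f t, to_nat_on (S (f t)) t)) ` T"
        by (auto simp: S_def image_iff intro!: bexI[of _ t])
    qed simp
  qed
  ultimately show ?thesis
    by (simp add: idx)
qed

lemma fs_of_family_Dbar:
  assumes "countable T" "f ` T \<subseteq> X - A"
  shows "fs_of_family f T \<in> Dbar X A"
proof -
  have "{y. fs_of_family f T y \<noteq> 0} \<subseteq> f ` T"
  proof
    fix y assume "y \<in> {y. fs_of_family f T y \<noteq> 0}"
    moreover have "fs_of_family f T y = 0" if "y \<notin> f ` T"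
    proof -
      have empty: "{t \<in> T. f t = y} = {}"
        using that by auto
      show ?thesis
        unfolding fs_of_family_def ecard_def empty by (simp add: zero_enat_def)
    qed
    ultimately show "y \<in> f ` T"
      by blast
  qed
  then show ?thesis
    using assms countable_subset[OF _ countable_image[OF assms(1)]] by (auto simp: Dbar_def)
qed

section \<open>Tracks along a chain of matchings\<close>

lemma sum_half_powers:
  "J \<le> M \<Longrightarrow> (\<Sum>m\<in>{J..<M}. (1/2::real)^m) = 2 * (1/2)^J - 2 * (1/2)^M"
  by (induction M rule: dec_induct) simp_all

lemma sum_half_powers_le: "(\<Sum>m\<in>{J..<M}. (1/2::real)^m) \<le> 2 * (1/2)^J"
  by (cases "J \<le> M") (simp_all add: sum_half_powers)

lemma eventually_geometric_less:
  fixes e :: ennreal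
  assumes "e > 0"
  shows "\<exists>N. \<forall>n\<ge>N. ennreal (c * (1/2)^n) < e"
proof -
  have "(\<lambda>n. c * (1/2::real)^n) \<longlonglongrightarrow> 0"
    by (intro tendsto_mult_right_zero LIMSEQ_realpow_zero) simp_all
  then have "(\<lambda>n. ennreal (c * (1/2)^n)) \<longlonglongrightarrow> 0"
    using tendsto_ennrealI by fastforce
  from order_tendstoD(2)[OF this assms] show ?thesis
    by (simp add: eventually_sequentially)
qed

definition econverges_to :: "('a \<Rightarrow> 'a \<Rightarrow> ennreal) \<Rightarrow> (nat \<Rightarrow> 'a) \<Rightarrow> 'a \<Rightarrow> bool" where
  "econverges_to d f l \<longleftrightarrow> (\<forall>e>0. \<exists>N. \<forall>n\<ge>N. d (f n) l < e)"

lemma econverges_to_shift: "econverges_to d f l \<Longrightarrow> econverges_to d (\<lambda>n. f (a + n)) l"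
  unfolding econverges_to_def by (metis add.commute trans_le_add2)

locale matching_chain =
  fixes X :: "'a set" and d :: "'a \<Rightarrow> 'a \<Rightarrow> ennreal" and A :: "'a set" and p :: real
    and \<beta> :: "nat \<Rightarrow> 'a fsum" and K :: "nat \<Rightarrow> ('a \<times> nat) set"
    and \<phi> :: "nat \<Rightarrow> 'a \<times> nat \<Rightarrow> 'a \<times> nat" and z w :: "nat \<Rightarrow> 'a \<times> nat \<Rightarrow> 'a"
  assumes metric_pair: "metric_pair X d A" and p: "p \<ge> 1" and complete: "ecomplete_on X d"
    and Dbar: "\<And>m. \<beta> m \<in> Dbar X A"
    and matching: "\<And>m. is_matching A (\<beta> m) (\<beta> (Suc m)) (K m) (\<phi> m) (z m) (w m)"
    and cost: "\<And>m. matching_cost d p (\<beta> m) (\<beta> (Suc m)) (K m) (\<phi> m) (z m) (w m) \<le> ennreal ((1/2)^m)"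
begin

abbreviation I :: "nat \<Rightarrow> ('a \<times> nat) set" where
  "I m \<equiv> fs_idx (\<beta> m)"

abbreviation c :: "nat \<Rightarrow> ('a \<times> nat) + ('a \<times> nat) \<Rightarrow> ennreal" where
  "c m \<equiv> matching_dist d (K m) (\<phi> m) (z m) (w m)"

lemma p_pos: "p > 0"
  using p by simp

lemma emetric: "emetric_on X d"
  using metric_pair by (simp add: metric_pair_def)

lemma A_subset: "A \<subseteq> X"
  using metric_pair by (simp add: metric_pair_def eclosed_in_def)

lemma matchingD:
  "K m \<subseteq> I m" "inj_on (\<phi> m) (K m)" "\<phi> m ` K m \<subseteq> I (Suc m)"
  "z m ` (I m - K m) \<subseteq> A" "w m ` (I (Suc m) - \<phi> m ` K m) \<subseteq> A"
  using matching[of m] by (auto simp: is_matching_def)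

lemma I_in_X: "q \<in> I m \<Longrightarrow> fst q \<in> X"
  using Dbar_fs_idx[OF Dbar] by blast

lemma c_le: "e \<in> I m <+> I (Suc m) \<Longrightarrow> c m e \<le> ennreal ((1/2)^m)"
  using le_lp_norm[OF p_pos, of e "I m <+> I (Suc m)" "c m"] cost[of m]
  unfolding matching_cost_eq_lp_norm[OF matching] by simp

lemma lp_norm_c_le: "lp_norm p (I m <+> I (Suc m)) (c m) \<le> ennreal ((1/2)^m)"
  using cost[of m] unfolding matching_cost_eq_lp_norm[OF matching] .

text \<open>Following the matchings upwards from the point with index \<open>i\<close> of \<open>\<beta> s\<close>: \<open>track s i n\<close>
  is the index reached in \<open>\<beta> (s + n)\<close>, or \<open>None\<close> once the point has been sent to \<open>A\<close>.\<close>
fun track :: "nat \<Rightarrow> 'a \<times> nat \<Rightarrow> nat \<Rightarrow> ('a \<times> nat) option" where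
  "track s i 0 = Some i"
| "track s i (Suc n) = (case track s i n of
      None \<Rightarrow> None
    | Some q \<Rightarrow> if q \<in> K (s + n) then Some (\<phi> (s + n) q) else None)"

lemma track_SucE:
  assumes "track s i (Suc n) = Some q'"
  obtains q where "track s i n = Some q" "q \<in> K (s + n)" "q' = \<phi> (s + n) q"
  using assms by (cases "track s i n") (auto split: if_splits)

lemma track_in_I: "i \<in> I s \<Longrightarrow> track s i n = Some q \<Longrightarrow> q \<in> I (s + n)"
proof (induction n arbitrary: q)
  case (Suc n)
  obtain q0 where "track s i n = Some q0" "q0 \<in> K (s + n)" "q = \<phi> (s + n) q0"
    using Suc.prems(2) by (rule track_SucE)
  then show ?case
    using matchingD(3)[of "s + n"] by auto
qed simp

lemma track_None_mono: "track s i n = None \<Longrightarrow> n \<le> m \<Longrightarrow> track s i m = None"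
  by (induction m) (auto simp: le_Suc_eq)

lemma track_defined_le: "track s i m \<noteq> None \<Longrightarrow> n \<le> m \<Longrightarrow> track s i n \<noteq> None"
  using track_None_mono[of s i n m] by argo

lemma track_inj:
  "i \<in> I s \<Longrightarrow> i' \<in> I s \<Longrightarrow> track s i n = Some q \<Longrightarrow> track s i' n = Some q \<Longrightarrow> i = i'"
proof (induction n arbitrary: q)
  case (Suc n)
  obtain q0 where q0: "track s i n = Some q0" "q0 \<in> K (s + n)" "q = \<phi> (s + n) q0"
    using Suc.prems(3) by (rule track_SucE)
  obtain q1 where q1: "track s i' n = Some q1" "q1 \<in> K (s + n)" "q = \<phi> (s + n) q1"
    using Suc.prems(4) by (rule track_SucE)
  have "q0 = q1"
    using q0 q1 inj_onD[OF matchingD(2)] by metis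
  then show ?case
    using Suc.IH[OF Suc.prems(1,2)] q0 q1 by simp
qed simp

lemma track_add:
  "track s i (a + b) = (case track s i a of None \<Rightarrow> None | Some q \<Rightarrow> track (s + a) q b)"
proof (induction b)
  case 0
  then show ?case by (cases "track s i a") auto
next
  case (Suc b)
  show ?case
  proof (cases "track s i a")
    case None
    then show ?thesis
      using track_None_mono[OF None, of "a + Suc b"] by simp
  next
    case (Some q)
    then have "track s i (a + b) = track (s + a) q b"
      using Suc.IH by simp
    then show ?thesis
      using Some by (simp add: add.assoc cong: option.case_cong if_cong)
  qed
qed

lemma track_add_Some: "track s i a = Some q \<Longrightarrow> track s i (a + b) = track (s + a) q b"
  by (simp add: track_add)

definition born :: "nat \<Rightarrow> 'a \<times> nat \<Rightarrow> bool" where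
  "born s i \<longleftrightarrow> i \<in> I s \<and> (s = 0 \<or> i \<notin> \<phi> (s - 1) ` K (s - 1))"

lemma track_merge:
  assumes "i \<in> I s" "i' \<in> I s'" "s \<le> s'" "s' \<le> m"
    and "track s i (m - s) = Some q" "track s' i' (m - s') = Some q"
  shows "track s i (s' - s) = Some i'"
proof -
  have m: "m - s = (s' - s) + (m - s')"
    using assms(3,4) by simp
  obtain q' where q': "track s i (s' - s) = Some q'"
    using assms(5) unfolding m track_add by (auto split: option.splits)
  have "track s' q' (m - s') = Some q"
    using assms(3,5) unfolding m track_add_Some[OF q'] by simp
  moreover have "q' \<in> I s'"
    using track_in_I[OF assms(1) q'] assms(3) by simp
  ultimately show ?thesis
    using track_inj[OF _ assms(2) _ assms(6)] q' by blast
qed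

lemma born_not_tracked:
  assumes "born s' i'" "s < s'"
  shows "track s i (s' - s) \<noteq> Some i'"
proof
  obtain n where n: "s' - s = Suc n"
    using assms(2) by (metis Suc_diff_Suc)
  assume "track s i (s' - s) = Some i'"
  then have "track s i (Suc n) = Some i'"
    by (simp add: n)
  then obtain q where "q \<in> K (s + n)" "i' = \<phi> (s + n) q"
    by (rule track_SucE)
  moreover have "s + n = s' - 1"
    using n assms(2) by simp
  ultimately show False
    using assms by (auto simp: born_def)
qed

lemma origin_exists: "q \<in> I m \<Longrightarrow> \<exists>s i. s \<le> m \<and> born s i \<and> track s i (m - s) = Some q"
proof (induction m arbitrary: q)
  case 0
  then show ?case
    by (intro exI[of _ 0] exI[of _ q]) (simp add: born_def)
next
  case (Suc m)
  show ?case
  proof (cases "q \<in> \<phi> m ` K m")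
    case True
    then obtain q0 where q0: "q0 \<in> K m" "q = \<phi> m q0"
      by auto
    then obtain s i where s: "s \<le> m" "born s i" "track s i (m - s) = Some q0"
      using Suc.IH matchingD(1) by blast
    then have "track s i (Suc (m - s)) = Some q"
      using q0 by simp
    then show ?thesis
      using s by (intro exI[of _ s] exI[of _ i]) (simp add: Suc_diff_le)
  next
    case False
    then show ?thesis
      using Suc.prems by (intro exI[of _ "Suc m"] exI[of _ q]) (simp add: born_def)
  qed
qed

lemma origin_unique:
  assumes "born s i" "born s' i'" "s \<le> m" "s' \<le> m"
    and "track s i (m - s) = Some q" "track s' i' (m - s') = Some q"
  shows "s = s' \<and> i = i'"
proof -
  have *: "s = s' \<and> i = i'" if "born s i" "born s' i'" "s \<le> s'" "s' \<le> m"
      "track s i (m - s) = Some q" "track s' i' (m - s') = Some q" for s i s' i'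
  proof -
    have "track s i (s' - s) = Some i'"
      using track_merge that by (auto simp: born_def)
    then show ?thesis
      using born_not_tracked[OF that(2)] that(3) by (cases "s < s'") auto
  qed
  show ?thesis
    using *[OF assms(1,2) _ assms(4-6)] *[OF assms(2,1) _ assms(3) assms(6,5)] by linarith
qed

definition origin :: "nat \<Rightarrow> 'a \<times> nat \<Rightarrow> nat \<times> ('a \<times> nat)" where
  "origin m q = (THE (s, i). s \<le> m \<and> born s i \<and> track s i (m - s) = Some q)"

lemma origin_eq:
  assumes "born s i" "s \<le> m" "track s i (m - s) = Some q"
  shows "origin m q = (s, i)"
  unfolding origin_def
proof (rule the_equality)
  show "\<And>t. (case t of (s', i') \<Rightarrow> s' \<le> m \<and> born s' i' \<and> track s' i' (m - s') = Some q) \<Longrightarrow> t = (s, i)"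
    using origin_unique[OF _ assms(1) _ assms(2) _ assms(3)] by auto
qed (use assms in simp)

lemma
  assumes "q \<in> I m"
  shows origin_le: "fst (origin m q) \<le> m"
    and born_origin: "born (fst (origin m q)) (snd (origin m q))"
    and track_origin: "track (fst (origin m q)) (snd (origin m q)) (m - fst (origin m q)) = Some q"
proof -
  obtain s i where si: "s \<le> m" "born s i" "track s i (m - s) = Some q"
    using origin_exists[OF assms] by blast
  then have "origin m q = (s, i)"
    by (intro origin_eq)
  then show "fst (origin m q) \<le> m" "born (fst (origin m q)) (snd (origin m q))"
    "track (fst (origin m q)) (snd (origin m q)) (m - fst (origin m q)) = Some q"
    using si by simp_all
qed

definition alive :: "nat \<Rightarrow> 'a \<times> nat \<Rightarrow> bool" where
  "alive s i \<longleftrightarrow> (\<forall>n. track s i n \<noteq> None)"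

definition track_pt :: "nat \<Rightarrow> 'a \<times> nat \<Rightarrow> nat \<Rightarrow> 'a" where
  "track_pt s i n = fst (the (track s i n))"

lemma alive_track: "alive s i \<Longrightarrow> \<exists>q. track s i n = Some q"
  by (simp add: alive_def)

lemma track_pt_in_X: "i \<in> I s \<Longrightarrow> track s i n \<noteq> None \<Longrightarrow> track_pt s i n \<in> X"
  using track_in_I[of i s n] I_in_X by (auto simp: track_pt_def)

lemma alive_track_add:
  assumes "track s i a = Some q"
  shows "alive (s + a) q \<longleftrightarrow> alive s i"
proof -
  have "track s i n \<noteq> None" if "alive (s + a) q" for n
  proof (cases "n \<le> a")
    case False
    then have "track s i n = track (s + a) q (n - a)"
      using track_add_Some[OF assms, of "n - a"] by simp
    then show ?thesis
      using that by (simp add: alive_def)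
  qed (use track_defined_le[of s i a n] assms in simp)
  moreover have "track (s + a) q n \<noteq> None" if "alive s i" for n
    using that track_add_Some[OF assms, of n] unfolding alive_def by metis
  ultimately show ?thesis
    by (auto simp: alive_def)
qed

lemma track_pt_add: "track s i a = Some q \<Longrightarrow> track_pt (s + a) q n = track_pt s i (a + n)"
  by (simp add: track_pt_def track_add_Some)

text \<open>The cost of the step of the track starting at \<open>t\<close> from level \<open>m\<close> to level \<open>Suc m\<close>, read
  off the matching between \<open>\<beta> m\<close> and \<open>\<beta> (Suc m)\<close>; a track starting at level \<open>Suc m\<close> enters
  through the edge that matches its first point with \<open>A\<close>.\<close>
definition reaches :: "nat \<Rightarrow> nat \<times> ('a \<times> nat) \<Rightarrow> bool" where
  "reaches m t \<longleftrightarrow> fst t = Suc m \<or> (fst t \<le> m \<and> track (fst t) (snd t) (m - fst t) \<noteq> None)"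

definition step_index :: "nat \<Rightarrow> nat \<times> ('a \<times> nat) \<Rightarrow> ('a \<times> nat) + ('a \<times> nat)" where
  "step_index m t =
     (if fst t = Suc m then Inr (snd t) else Inl (the (track (fst t) (snd t) (m - fst t))))"

definition step_cost :: "nat \<Rightarrow> nat \<times> ('a \<times> nat) \<Rightarrow> ennreal" where
  "step_cost m t = (if reaches m t then c m (step_index m t) else 0)"

lemma step_cost_track: "track s i k = Some q \<Longrightarrow> step_cost (s + k) (s, i) = c (s + k) (Inl q)"
  by (simp add: step_cost_def reaches_def step_index_def)

lemma step_cost_entry: "step_cost m (Suc m, i) = c m (Inr i)"
  by (simp add: step_cost_def reaches_def step_index_def)

lemma step_index_in_I:
  assumes "snd t \<in> I (fst t)" "reaches m t"
  shows "step_index m t \<in> I m <+> I (Suc m)"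
proof (cases "fst t = Suc m")
  case False
  then obtain q where q: "track (fst t) (snd t) (m - fst t) = Some q" "fst t \<le> m"
    using assms(2) by (auto simp: reaches_def)
  then have "q \<in> I m"
    using track_in_I[OF assms(1) q(1)] by simp
  then show ?thesis
    using q False by (simp add: step_index_def)
qed (use assms in \<open>simp add: step_index_def\<close>)

lemma step_cost_le: "snd t \<in> I (fst t) \<Longrightarrow> step_cost m t \<le> ennreal ((1/2)^m)"
  using c_le step_index_in_I by (simp add: step_cost_def)

lemma track_dist_le:
  assumes "i \<in> I s" "track s i k \<noteq> None"
  shows "d (fst i) (track_pt s i k) \<le> (\<Sum>m\<in>{s..<s + k}. step_cost m (s, i))"
  using assms(2)
proof (induction k)
  case 0
  then show ?case
    using emetric_on_refl[OF emetric I_in_X[OF assms(1)]] by (simp add: track_pt_def)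
next
  case (Suc k)
  then obtain q' where q': "track s i (Suc k) = Some q'"
    by blast
  then obtain q where q: "track s i k = Some q" "q \<in> K (s + k)" "q' = \<phi> (s + k) q"
    by (rule track_SucE)
  have X: "fst q \<in> X" "fst q' \<in> X"
    using track_in_I[OF assms(1)] q q' I_in_X by blast+
  have "d (fst i) (fst q') \<le> d (fst i) (fst q) + d (fst q) (fst q')"
    using emetric_on_triangle[OF emetric I_in_X[OF assms(1)] X] .
  also have "d (fst i) (fst q) \<le> (\<Sum>m\<in>{s..<s + k}. step_cost m (s, i))"
    using Suc.IH q by (simp add: track_pt_def)
  also have "d (fst q) (fst q') = step_cost (s + k) (s, i)"
    using step_cost_track[OF q(1)] q by simp
  finally show ?case
    using q' by (simp add: track_pt_def add_right_mono)
qed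

lemma track_pt_dist_le:
  assumes "i \<in> I s" "alive s i"
  shows "d (track_pt s i n) (track_pt s i (n + k)) \<le> ennreal (2 * (1/2)^(s + n))"
proof -
  obtain q where q: "track s i n = Some q"
    using alive_track[OF assms(2)] by blast
  have qI: "q \<in> I (s + n)"
    using track_in_I[OF assms(1) q] .
  have "track (s + n) q k \<noteq> None"
    using assms(2) track_add_Some[OF q, of k] unfolding alive_def by metis
  then have "d (fst q) (track_pt (s + n) q k) \<le> (\<Sum>m\<in>{s + n..<s + n + k}. step_cost m (s + n, q))"
    by (rule track_dist_le[OF qI])
  also have "\<dots> \<le> (\<Sum>m\<in>{s + n..<s + n + k}. ennreal ((1/2)^m))"
    using qI by (intro sum_mono step_cost_le) simp
  also have "\<dots> \<le> ennreal (2 * (1/2)^(s + n))"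
    using sum_half_powers_le by (simp add: sum_ennreal ennreal_leI)
  finally show ?thesis
    using q track_pt_add[OF q] by (simp add: track_pt_def)
qed

lemma track_pt_cauchy:
  assumes "i \<in> I s" "alive s i" "e > 0"
  shows "\<exists>N. \<forall>m\<ge>N. \<forall>n\<ge>N. d (track_pt s i m) (track_pt s i n) < e"
proof -
  obtain N where N: "\<And>n. n \<ge> N \<Longrightarrow> ennreal (2 * (1/2)^n) < e"
    using eventually_geometric_less[OF assms(3)] by blast
  have less: "d (track_pt s i m) (track_pt s i n) < e" if "N \<le> m" "m \<le> n" for m n
  proof -
    have "d (track_pt s i m) (track_pt s i (m + (n - m))) \<le> ennreal (2 * (1/2)^(s + m))"
      by (rule track_pt_dist_le[OF assms(1,2)])
    also have "\<dots> < e"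
      using N[of "s + m"] that by simp
    finally show ?thesis
      using that by simp
  qed
  have X: "track_pt s i n \<in> X" for n
    using track_pt_in_X[OF assms(1)] assms(2) by (simp add: alive_def)
  show ?thesis
    using less emetric_on_sym[OF emetric X X] by (metis nle_le)
qed

text \<open>Limits are not unique in a pseudometric; the choice fixes one limit per track.\<close>
definition track_limit :: "nat \<Rightarrow> 'a \<times> nat \<Rightarrow> 'a" where
  "track_limit s i = (SOME l. l \<in> X \<and> econverges_to d (track_pt s i) l)"

lemma
  assumes "i \<in> I s" "alive s i"
  shows track_limit_in_X: "track_limit s i \<in> X"
    and econverges_to_track_limit: "econverges_to d (track_pt s i) (track_limit s i)"
proof -
  have "\<forall>n. track_pt s i n \<in> X"
    using track_pt_in_X[OF assms(1)] assms(2) by (simp add: alive_def)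
  then have "\<exists>l\<in>X. econverges_to d (track_pt s i) l"
    using complete track_pt_cauchy[OF assms] unfolding ecomplete_on_def econverges_to_def by blast
  then obtain l where "l \<in> X \<and> econverges_to d (track_pt s i) l"
    by blast
  then have "track_limit s i \<in> X \<and> econverges_to d (track_pt s i) (track_limit s i)"
    unfolding track_limit_def by (rule someI)
  then show "track_limit s i \<in> X" "econverges_to d (track_pt s i) (track_limit s i)"
    by blast+
qed

definition roots :: "(nat \<times> ('a \<times> nat)) set" where
  "roots = {(s, i). born s i \<and> alive s i \<and> track_limit s i \<notin> A}"

abbreviation root_limit :: "nat \<times> ('a \<times> nat) \<Rightarrow> 'a" where
  "root_limit \<equiv> case_prod track_limit"

definition limit_diagram :: "'a fsum" where
  "limit_diagram = fs_of_family root_limit roots"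

definition root_index :: "nat \<times> ('a \<times> nat) \<Rightarrow> 'a \<times> nat" where
  "root_index = family_index root_limit roots"

definition index_root :: "'a \<times> nat \<Rightarrow> nat \<times> ('a \<times> nat)" where
  "index_root = inv_into roots root_index"

lemma countable_roots: "countable roots"
proof (rule countable_subset)
  show "roots \<subseteq> (SIGMA s:UNIV. I s)"
    by (auto simp: roots_def born_def)
  show "countable (SIGMA s:UNIV. I s)"
    using countable_fs_idx[OF Dbar] by (intro countable_SIGMA) auto
qed

lemma bij_betw_root_index: "bij_betw root_index roots (fs_idx limit_diagram)"
  unfolding root_index_def limit_diagram_def by (rule bij_betw_family_index[OF countable_roots])

lemma fst_root_index: "fst (root_index t) = root_limit t"
  by (simp add: root_index_def family_index_def)

lemma
  assumes "e \<in> fs_idx limit_diagram"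
  shows index_root_in_roots: "index_root e \<in> roots"
    and root_index_index_root: "root_index (index_root e) = e"
  using assms bij_betw_root_index
  by (auto simp: index_root_def bij_betw_def inv_into_into f_inv_into_f)

lemma limit_diagram_Dbar: "limit_diagram \<in> Dbar X A"
proof -
  have "root_limit t \<in> X - A" if "t \<in> roots" for t
    using that track_limit_in_X[of "snd t" "fst t"] by (cases t) (simp add: roots_def born_def)
  then have "root_limit ` roots \<subseteq> X - A"
    by blast
  then show ?thesis
    unfolding limit_diagram_def by (rule fs_of_family_Dbar[OF countable_roots])
qed

lemma alive_origin_iff:
  assumes "i \<in> I J"
  shows "case_prod alive (origin J i) \<longleftrightarrow> alive J i"
  using alive_track_add[OF track_origin[OF assms]] origin_le[OF assms] by (simp add: case_prod_beta)

lemma econverges_to_root_limit_origin: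
  assumes "i \<in> I J" "alive J i"
  shows "econverges_to d (track_pt J i) (root_limit (origin J i))" "root_limit (origin J i) \<in> X"
proof -
  obtain s i0 where o: "origin J i = (s, i0)"
    by (cases "origin J i")
  have s: "s \<le> J" "born s i0" "track s i0 (J - s) = Some i"
    using origin_le[OF assms(1)] born_origin[OF assms(1)] track_origin[OF assms(1)] o by simp_all
  have "alive s i0"
    using alive_origin_iff[OF assms(1)] assms(2) o by simp
  moreover have "i0 \<in> I s"
    using s(2) by (simp add: born_def)
  ultimately have lim: "track_limit s i0 \<in> X" "econverges_to d (track_pt s i0) (track_limit s i0)"
    using track_limit_in_X econverges_to_track_limit by blast+
  have "track_pt J i = (\<lambda>n. track_pt s i0 ((J - s) + n))"
    using track_pt_add[OF s(3)] s(1) by fastforce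
  then show "econverges_to d (track_pt J i) (root_limit (origin J i))"
    using econverges_to_shift[OF lim(2)] o by simp
  show "root_limit (origin J i) \<in> X"
    using lim(1) o by simp
qed

text \<open>The matching of \<open>\<beta> J\<close> with the limit diagram: a point is matched with the limit of its
  track if the track survives, otherwise with the point of \<open>A\<close> where the track ends; a point of the
  limit diagram whose track starts above level \<open>J\<close> is matched with the point of \<open>A\<close> the track
  starts from.\<close>
definition lim_K :: "nat \<Rightarrow> ('a \<times> nat) set" where
  "lim_K J = {i \<in> I J. origin J i \<in> roots}"

definition lim_\<phi> :: "nat \<Rightarrow> 'a \<times> nat \<Rightarrow> 'a \<times> nat" where
  "lim_\<phi> J i = root_index (origin J i)"

definition track_end :: "nat \<Rightarrow> 'a \<times> nat \<Rightarrow> nat" where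
  "track_end s i = (LEAST n. track s i (Suc n) = None)"

definition lim_z :: "nat \<Rightarrow> 'a \<times> nat \<Rightarrow> 'a" where
  "lim_z J i = (if alive J i then root_limit (origin J i)
                else z (J + track_end J i) (the (track J i (track_end J i))))"

definition lim_w :: "'a \<times> nat \<Rightarrow> 'a" where
  "lim_w e = w (fst (index_root e) - 1) (snd (index_root e))"

lemma track_endE:
  assumes "\<not> alive s i"
  obtains q where "track s i (track_end s i) = Some q" "q \<notin> K (s + track_end s i)"
proof -
  obtain n where "track s i n = None"
    using assms unfolding alive_def by blast
  then obtain k where k: "track s i (Suc k) = None"
    by (cases n) auto
  have none: "track s i (Suc (track_end s i)) = None"
    unfolding track_end_def by (rule LeastI[of _ k]) (rule k)
  have "track s i (track_end s i) \<noteq> None"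
  proof (cases "track_end s i")
    case (Suc k')
    then have "track s i (Suc k') \<noteq> None"
      using not_less_Least[of k' "\<lambda>n. track s i (Suc n) = None"] by (simp add: track_end_def)
    then show ?thesis
      using Suc by simp
  qed simp
  then obtain q where "track s i (track_end s i) = Some q"
    by blast
  moreover have "q \<notin> K (s + track_end s i)"
    using none calculation by (auto split: if_splits)
  ultimately show ?thesis
    using that by blast
qed

lemma lim_K_alive:
  assumes "i \<in> lim_K J"
  shows "alive J i"
proof -
  have "i \<in> I J" "origin J i \<in> roots"
    using assms by (simp_all add: lim_K_def)
  moreover from this(2) have "case_prod alive (origin J i)"
    by (cases "origin J i") (simp add: roots_def)
  ultimately show ?thesis
    using alive_origin_iff[of i J] by metis
qed

lemma root_index_in: "t \<in> roots \<Longrightarrow> root_index t \<in> fs_idx limit_diagram"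
  using bij_betw_root_index by (auto simp: bij_betw_def)

lemma less_fst_index_root:
  assumes "e \<in> fs_idx limit_diagram" "e \<notin> lim_\<phi> J ` lim_K J"
  shows "J < fst (index_root e)"
proof (rule ccontr)
  obtain s i0 where t: "index_root e = (s, i0)"
    by (cases "index_root e")
  then have root: "born s i0" "alive s i0" "(s, i0) \<in> roots"
    using index_root_in_roots[OF assms(1)] by (auto simp: roots_def)
  assume "\<not> J < fst (index_root e)"
  then have "s \<le> J"
    using t by simp
  obtain i where i: "track s i0 (J - s) = Some i"
    using alive_track[OF root(2)] by blast
  have "origin J i = (s, i0)"
    using origin_eq[OF root(1) \<open>s \<le> J\<close> i] .
  moreover have "i \<in> I J"
    using track_in_I[OF _ i] root(1) \<open>s \<le> J\<close> by (simp add: born_def)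
  ultimately have "i \<in> lim_K J" "lim_\<phi> J i = e"
    using root(3) root_index_index_root[OF assms(1)] t by (simp_all add: lim_K_def lim_\<phi>_def)
  then show False
    using assms(2) by blast
qed

lemma inj_on_lim_\<phi>: "inj_on (lim_\<phi> J) (lim_K J)"
proof (rule inj_onI)
  fix i i' assume ii: "i \<in> lim_K J" "i' \<in> lim_K J" "lim_\<phi> J i = lim_\<phi> J i'"
  then have "origin J i = origin J i'"
    using bij_betw_root_index by (auto simp: lim_K_def lim_\<phi>_def bij_betw_def inj_on_def)
  then show "i = i'"
    using track_origin ii(1,2) by (metis (no_types, lifting) lim_K_def mem_Collect_eq option.inject)
qed

lemma lim_z_in_A:
  assumes "i \<in> I J - lim_K J"
  shows "lim_z J i \<in> A"
proof (cases "alive J i")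
  case True
  moreover have "i \<in> I J"
    using assms by blast
  ultimately have "case_prod alive (origin J i)"
    using alive_origin_iff[of i J] by metis
  then show ?thesis
    using assms True born_origin[of i J] by (auto simp: lim_K_def lim_z_def roots_def split: prod.splits)
next
  case False
  then obtain q where q: "track J i (track_end J i) = Some q" "q \<notin> K (J + track_end J i)"
    by (rule track_endE)
  then have "q \<in> I (J + track_end J i) - K (J + track_end J i)"
    using track_in_I assms by blast
  then show ?thesis
    using matchingD(4) q False by (auto simp: lim_z_def)
qed

lemma lim_w_in_A:
  assumes "e \<in> fs_idx limit_diagram" "e \<notin> lim_\<phi> J ` lim_K J"
  shows "lim_w e \<in> A"
proof -
  obtain s i0 where t: "index_root e = (s, i0)"
    by (cases "index_root e")
  then have "born s i0" "J < s"
    using index_root_in_roots[OF assms(1)] less_fst_index_root[OF assms] by (simp_all add: roots_def)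
  then have "i0 \<in> I (Suc (s - 1)) - \<phi> (s - 1) ` K (s - 1)"
    by (simp add: born_def)
  then show "lim_w e \<in> A"
    using matchingD(5) t by (auto simp: lim_w_def)
qed

lemma lim_is_matching: "is_matching A (\<beta> J) limit_diagram (lim_K J) (lim_\<phi> J) (lim_z J) lim_w"
  unfolding is_matching_def
proof (intro conjI)
  show "lim_\<phi> J ` lim_K J \<subseteq> fs_idx limit_diagram"
  proof (rule image_subsetI)
    show "lim_\<phi> J i \<in> fs_idx limit_diagram" if "i \<in> lim_K J" for i
      using that root_index_in by (simp add: lim_K_def lim_\<phi>_def)
  qed
  show "lim_K J \<subseteq> I J"
    by (auto simp: lim_K_def)
  show "lim_z J ` (I J - lim_K J) \<subseteq> A" "lim_w ` (fs_idx limit_diagram - lim_\<phi> J ` lim_K J) \<subseteq> A"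
    using lim_z_in_A lim_w_in_A by blast+
qed (rule inj_on_lim_\<phi>)

abbreviation lim_dist :: "nat \<Rightarrow> ('a \<times> nat) + ('a \<times> nat) \<Rightarrow> ennreal" where
  "lim_dist J \<equiv> matching_dist d (lim_K J) (lim_\<phi> J) (lim_z J) lim_w"

definition unmatched :: "nat \<Rightarrow> (('a \<times> nat) + ('a \<times> nat)) set" where
  "unmatched J = I J <+> (fs_idx limit_diagram - lim_\<phi> J ` lim_K J)"

text \<open>The level and the index at which the track through an index of the cost family starts.\<close>
definition start :: "nat \<Rightarrow> ('a \<times> nat) + ('a \<times> nat) \<Rightarrow> nat \<times> ('a \<times> nat)" where
  "start J = case_sum (Pair J) index_root"

definition starts :: "nat \<Rightarrow> (nat \<times> ('a \<times> nat)) set" where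
  "starts J = {t. fst t = J \<and> snd t \<in> I J} \<union> {t. born (fst t) (snd t) \<and> J < fst t}"

lemma starts_I: "t \<in> starts J \<Longrightarrow> snd t \<in> I (fst t)"
  by (auto simp: starts_def born_def)

lemma start_in_starts:
  assumes "x \<in> unmatched J"
  shows "start J x \<in> starts J"
proof (cases x)
  case (Inr e)
  then have "e \<in> fs_idx limit_diagram" "e \<notin> lim_\<phi> J ` lim_K J"
    using assms by (simp_all add: unmatched_def)
  then have "index_root e \<in> roots" "J < fst (index_root e)"
    using index_root_in_roots less_fst_index_root by blast+
  then show ?thesis
    using Inr by (cases "index_root e") (simp add: start_def starts_def roots_def)
qed (use assms in \<open>simp add: start_def starts_def unmatched_def\<close>)

lemma inj_on_start: "inj_on (start J) (unmatched J)"
  unfolding start_def unmatched_def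
proof (rule inj_on_case_sum)
  show "inj_on (Pair J) (I J)"
    by (simp add: inj_on_def)
  have "fs_idx limit_diagram \<subseteq> root_index ` roots"
    using bij_betw_root_index by (simp add: bij_betw_def)
  then show "inj_on index_root (fs_idx limit_diagram - lim_\<phi> J ` lim_K J)"
    unfolding index_root_def by (rule inj_on_inv_into[OF subset_trans[OF Diff_subset]])
  have late: "index_root e \<noteq> (J, i)" if "e \<in> fs_idx limit_diagram - lim_\<phi> J ` lim_K J" for e i
    using less_fst_index_root[of e J] that by auto
  show "Pair J ` I J \<inter> index_root ` (fs_idx limit_diagram - lim_\<phi> J ` lim_K J) = {}"
  proof (rule equals0I)
    fix t assume "t \<in> Pair J ` I J \<inter> index_root ` (fs_idx limit_diagram - lim_\<phi> J ` lim_K J)"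
    then obtain i e where "t = (J, i)" "t = index_root e" "e \<in> fs_idx limit_diagram - lim_\<phi> J ` lim_K J"
      by blast
    then show False
      using late[of e i] by simp
  qed
qed

text \<open>Two tracks from distinct starts never use the same edge: if the later one started above
  level \<open>J\<close>, it started at a born point, which no earlier track reaches.\<close>
lemma inj_on_step_index: "inj_on (step_index m) {t \<in> starts J. reaches m t}"
proof (rule inj_onI)
  have meet: "t = t'"
    if t: "t \<in> starts J" "fst t \<le> m" "track (fst t) (snd t) (m - fst t) = Some q"
      and t': "t' \<in> starts J" "fst t' \<le> m" "track (fst t') (snd t') (m - fst t') = Some q"
      and le: "fst t \<le> fst t'" for t t' q
  proof -
    have tr: "track (fst t) (snd t) (fst t' - fst t) = Some (snd t')"
      using track_merge[OF starts_I[OF t(1)] starts_I[OF t'(1)] le t'(2) t(3) t'(3)] .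
    show ?thesis
    proof (cases "fst t < fst t'")
      case True
      then have "born (fst t') (snd t')"
        using t(1) t'(1) by (auto simp: starts_def)
      then show ?thesis
        using born_not_tracked True tr by blast
    qed (use le tr in \<open>simp add: prod_eq_iff\<close>)
  qed
  fix t t' assume t: "t \<in> {t \<in> starts J. reaches m t}" and t': "t' \<in> {t \<in> starts J. reaches m t}"
    and eq: "step_index m t = step_index m t'"
  show "t = t'"
  proof (cases "fst t = Suc m \<or> fst t' = Suc m")
    case True
    then show ?thesis
      using eq by (auto simp: step_index_def prod_eq_iff split: if_splits)
  next
    case False
    then obtain q q' where q: "fst t \<le> m" "track (fst t) (snd t) (m - fst t) = Some q"
      and q': "fst t' \<le> m" "track (fst t') (snd t') (m - fst t') = Some q'"
      using t t' by (auto simp: reaches_def)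
    then have "q = q'"
      using eq False by (simp add: step_index_def)
    then show ?thesis
      using meet[where t = t and t' = t'] meet[where t = t' and t' = t] t t' q q'
      by (cases "fst t \<le> fst t'") auto
  qed
qed

lemma lp_norm_step_cost_le:
  assumes "F \<subseteq> unmatched J"
  shows "lp_norm p F (\<lambda>x. step_cost m (start J x)) \<le> ennreal ((1/2)^m)"
proof -
  let ?S = "{x \<in> F. reaches m (start J x)}"
  have "lp_norm p F (\<lambda>x. step_cost m (start J x)) \<le> lp_norm p (I m <+> I (Suc m)) (c m)"
  proof (rule lp_norm_reindex[OF p_pos])
    show "inj_on (step_index m \<circ> start J) ?S"
    proof (rule comp_inj_on)
      show "inj_on (start J) ?S"
        by (rule inj_on_subset[OF inj_on_start]) (use assms in auto)
      show "inj_on (step_index m) (start J ` ?S)"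
        by (rule inj_on_subset[OF inj_on_step_index[of m J]]) (use start_in_starts assms in auto)
    qed
    show "(step_index m \<circ> start J) ` ?S \<subseteq> I m <+> I (Suc m)"
    proof (rule image_subsetI)
      fix x assume x: "x \<in> ?S"
      then have "start J x \<in> starts J"
        using start_in_starts assms by blast
      then show "(step_index m \<circ> start J) x \<in> I m <+> I (Suc m)"
        using step_index_in_I[OF starts_I] x by simp
    qed
  qed (auto simp: step_cost_def)
  also have "\<dots> \<le> ennreal ((1/2)^m)"
    by (rule lp_norm_c_le)
  finally show ?thesis .
qed

lemma sum_step_cost_mono:
  "a \<le> b \<Longrightarrow> (\<Sum>m\<in>{b..<M}. step_cost m t) \<le> (\<Sum>m\<in>{a..<M}. step_cost m t)"
  by (intro sum_mono2) auto

lemma dist_track_limit_eventually_le: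
  assumes "i \<in> I s" "alive s i" "econverges_to d (track_pt s i) l" "l \<in> X" "\<epsilon> > 0"
  shows "\<forall>\<^sub>F M in sequentially. d (fst i) l \<le> (\<Sum>m\<in>{s..<M}. step_cost m (s, i)) + ennreal \<epsilon>"
proof -
  obtain N where N: "\<And>n. n \<ge> N \<Longrightarrow> d (track_pt s i n) l < ennreal \<epsilon>"
    using assms(3,5) unfolding econverges_to_def by (meson ennreal_less_zero_iff)
  have "d (fst i) l \<le> (\<Sum>m\<in>{s..<M}. step_cost m (s, i)) + ennreal \<epsilon>" if M: "s + N \<le> M" for M
  proof -
    have X: "track_pt s i (M - s) \<in> X"
      using track_pt_in_X[OF assms(1)] assms(2) by (simp add: alive_def)
    have "N \<le> M - s"
      using M by simp
    then have tail: "d (track_pt s i (M - s)) l \<le> ennreal \<epsilon>"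
      by (rule less_imp_le[OF N])
    have "d (fst i) l \<le> d (fst i) (track_pt s i (M - s)) + d (track_pt s i (M - s)) l"
      using emetric_on_triangle[OF emetric I_in_X[OF assms(1)] X assms(4)] .
    also have "\<dots> \<le> (\<Sum>m\<in>{s..<M}. step_cost m (s, i)) + ennreal \<epsilon>"
      using track_dist_le[OF assms(1), of "M - s"] assms(2) M tail
      by (intro add_mono) (simp_all add: alive_def)
    finally show ?thesis .
  qed
  then show ?thesis
    by (auto simp: eventually_sequentially)
qed

lemma lim_dist_alive_eventually_le:
  assumes "i \<in> I J" "alive J i" "\<epsilon> > 0"
  shows "\<forall>\<^sub>F M in sequentially. lim_dist J (Inl i) \<le> (\<Sum>m\<in>{J..<M}. step_cost m (J, i)) + ennreal \<epsilon>"
proof -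
  have "lim_dist J (Inl i) = d (fst i) (root_limit (origin J i))"
    using assms(2) by (simp add: lim_\<phi>_def lim_z_def fst_root_index)
  then show ?thesis
    using dist_track_limit_eventually_le[OF assms(1,2) econverges_to_root_limit_origin[OF assms(1,2)] assms(3)]
    by simp
qed

lemma lim_dist_dead_le:
  assumes "i \<in> I J" "\<not> alive J i"
  shows "lim_dist J (Inl i) \<le> (\<Sum>m\<in>{J..<Suc (J + track_end J i)}. step_cost m (J, i))"
proof -
  define n where "n = track_end J i"
  obtain q where q: "track J i n = Some q" "q \<notin> K (J + n)"
    using track_endE[OF assms(2)] n_def by blast
  have X: "fst q \<in> X" "z (J + n) q \<in> X"
    using track_in_I[OF assms(1) q(1)] I_in_X matchingD(4) q(2) A_subset by blast+
  have "i \<notin> lim_K J"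
    using lim_K_alive assms(2) by blast
  then have "lim_dist J (Inl i) = d (fst i) (z (J + n) q)"
    using assms(2) q by (simp add: lim_z_def n_def)
  also have "\<dots> \<le> d (fst i) (fst q) + d (fst q) (z (J + n) q)"
    using emetric_on_triangle[OF emetric I_in_X[OF assms(1)] X] .
  also have "\<dots> \<le> (\<Sum>m\<in>{J..<J + n}. step_cost m (J, i)) + step_cost (J + n) (J, i)"
    using track_dist_le[OF assms(1), of n] q step_cost_track[OF q(1)]
    by (intro add_mono) (simp_all add: track_pt_def)
  also have "\<dots> = (\<Sum>m\<in>{J..<Suc (J + n)}. step_cost m (J, i))"
    by simp
  finally show ?thesis
    by (simp add: n_def)
qed

lemma unmatched_rootE:
  assumes "e \<in> fs_idx limit_diagram" "e \<notin> lim_\<phi> J ` lim_K J"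
  obtains r i0 where "index_root e = (Suc r, i0)" "J \<le> r" "born (Suc r) i0" "alive (Suc r) i0"
proof -
  obtain s i0 where t: "index_root e = (s, i0)"
    by (cases "index_root e")
  then have "born s i0" "alive s i0" "J < s"
    using index_root_in_roots[OF assms(1)] less_fst_index_root[OF assms] by (simp_all add: roots_def)
  then show ?thesis
    using that[of "s - 1" i0] t by simp
qed

lemma lim_dist_root_le:
  assumes "e \<in> fs_idx limit_diagram" "e \<notin> lim_\<phi> J ` lim_K J"
    and "index_root e = (Suc r, i0)" "born (Suc r) i0" "alive (Suc r) i0"
  shows "lim_dist J (Inr e) \<le> step_cost r (Suc r, i0) + d (fst i0) (track_limit (Suc r) i0)"
proof -
  have i0: "i0 \<in> I (Suc r)" "i0 \<notin> \<phi> r ` K r"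
    using assms(4) by (simp_all add: born_def)
  have X: "w r i0 \<in> X" "track_limit (Suc r) i0 \<in> X"
    using matchingD(5)[of r] i0 A_subset track_limit_in_X[OF i0(1) assms(5)] by blast+
  have "lim_dist J (Inr e) = d (w r i0) (track_limit (Suc r) i0)"
    using assms(2,3) root_index_index_root[OF assms(1)] fst_root_index[of "index_root e"]
    by (simp add: lim_w_def)
  also have "\<dots> \<le> d (w r i0) (fst i0) + d (fst i0) (track_limit (Suc r) i0)"
    using emetric_on_triangle[OF emetric X(1) I_in_X[OF i0(1)] X(2)] .
  also have "d (w r i0) (fst i0) = step_cost r (Suc r, i0)"
    using step_cost_entry[of r i0] i0(2) by simp
  finally show ?thesis .
qed

lemma lim_dist_root_eventually_le:
  assumes "e \<in> fs_idx limit_diagram" "e \<notin> lim_\<phi> J ` lim_K J" "\<epsilon> > 0"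
  shows "\<forall>\<^sub>F M in sequentially.
           lim_dist J (Inr e) \<le> (\<Sum>m\<in>{J..<M}. step_cost m (index_root e)) + ennreal \<epsilon>"
proof -
  obtain r i0 where root: "index_root e = (Suc r, i0)" "J \<le> r" "born (Suc r) i0" "alive (Suc r) i0"
    using unmatched_rootE[OF assms(1,2)] .
  have i0: "i0 \<in> I (Suc r)"
    using root(3) by (simp add: born_def)
  note bound = lim_dist_root_le[OF assms(1,2) root(1,3,4)]
  have step: "lim_dist J (Inr e) \<le> (\<Sum>m\<in>{J..<M}. step_cost m (Suc r, i0)) + ennreal \<epsilon>"
    if "d (fst i0) (track_limit (Suc r) i0) \<le> (\<Sum>m\<in>{Suc r..<M}. step_cost m (Suc r, i0)) + ennreal \<epsilon>"
      and "Suc r \<le> M" for M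
  proof -
    have "lim_dist J (Inr e)
        \<le> step_cost r (Suc r, i0) + ((\<Sum>m\<in>{Suc r..<M}. step_cost m (Suc r, i0)) + ennreal \<epsilon>)"
      using bound that(1) by (meson add_left_mono order_trans)
    also have "\<dots> = (\<Sum>m\<in>{r..<M}. step_cost m (Suc r, i0)) + ennreal \<epsilon>"
      using that(2) by (simp add: sum.atLeast_Suc_lessThan add.assoc)
    also have "\<dots> \<le> (\<Sum>m\<in>{J..<M}. step_cost m (Suc r, i0)) + ennreal \<epsilon>"
      using root(2) by (intro add_right_mono sum_step_cost_mono)
    finally show ?thesis .
  qed
  show ?thesis
    unfolding root(1)
    using eventually_conj[OF dist_track_limit_eventually_le[OF i0 root(4)
          econverges_to_track_limit[OF i0 root(4)] track_limit_in_X[OF i0 root(4)] assms(3)]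
        eventually_ge_at_top[of "Suc r"]]
    by (rule eventually_mono) (use step in blast)
qed

lemma lim_dist_eventually_le:
  assumes "x \<in> unmatched J" "\<epsilon> > 0"
  shows "\<forall>\<^sub>F M in sequentially. lim_dist J x \<le> (\<Sum>m\<in>{J..<M}. step_cost m (start J x)) + ennreal \<epsilon>"
proof (cases x)
  case (Inl i)
  then have i: "i \<in> I J"
    using assms(1) by (simp add: unmatched_def)
  show ?thesis
  proof (cases "alive J i")
    case True
    then show ?thesis
      using lim_dist_alive_eventually_le[OF i True assms(2)] Inl by (simp add: start_def)
  next
    case False
    have "lim_dist J x \<le> (\<Sum>m\<in>{J..<M}. step_cost m (start J x)) + ennreal \<epsilon>"
      if "Suc (J + track_end J i) \<le> M" for M
    proof -
      have "(\<Sum>m\<in>{J..<Suc (J + track_end J i)}. step_cost m (J, i)) \<le> (\<Sum>m\<in>{J..<M}. step_cost m (J, i))"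
        using that by (intro sum_mono2) auto
      then show ?thesis
        using lim_dist_dead_le[OF i False] Inl by (simp add: start_def add_increasing2)
    qed
    then show ?thesis
      by (auto simp: eventually_sequentially)
  qed
next
  case (Inr e)
  then show ?thesis
    using lim_dist_root_eventually_le[OF _ _ assms(2), of e J] assms(1) by (simp add: unmatched_def start_def)
qed

lemma lp_norm_sum_step_cost_le:
  assumes "F \<subseteq> unmatched J"
  shows "lp_norm p F (\<lambda>x. \<Sum>m\<in>{J..<M}. step_cost m (start J x)) \<le> ennreal (2 * (1/2)^J)"
proof -
  have "lp_norm p F (\<lambda>x. \<Sum>m\<in>{J..<M}. step_cost m (start J x))
      \<le> (\<Sum>m\<in>{J..<M}. lp_norm p F (\<lambda>x. step_cost m (start J x)))"
    by (rule lp_norm_sum_le[OF p finite_atLeastLessThan])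
  also have "\<dots> \<le> (\<Sum>m\<in>{J..<M}. ennreal ((1/2)^m))"
    by (rule sum_mono) (rule lp_norm_step_cost_le[OF assms])
  also have "\<dots> \<le> ennreal (2 * (1/2)^J)"
    using sum_half_powers_le[of J M] by (simp add: sum_ennreal ennreal_leI)
  finally show ?thesis .
qed

lemma lp_norm_lim_dist_finite_le:
  assumes "finite F" "F \<subseteq> unmatched J" "\<delta> > 0"
  shows "lp_norm p F (lim_dist J) \<le> ennreal (2 * (1/2)^J) + ennreal \<delta>"
proof -
  define \<epsilon> where "\<epsilon> = \<delta> / (real (card F) + 1)"
  have \<epsilon>: "\<epsilon> > 0" "real (card F) * \<epsilon> \<le> \<delta>"
    using assms(3) by (simp_all add: \<epsilon>_def field_simps)
  have "\<forall>\<^sub>F M in sequentially. \<forall>x\<in>F. lim_dist J x \<le> (\<Sum>m\<in>{J..<M}. step_cost m (start J x)) + ennreal \<epsilon>"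
    using assms(2) lim_dist_eventually_le[OF _ \<epsilon>(1)] by (intro eventually_ball_finite[OF assms(1)]) blast
  then obtain M where M: "\<And>x. x \<in> F \<Longrightarrow> lim_dist J x \<le> (\<Sum>m\<in>{J..<M}. step_cost m (start J x)) + ennreal \<epsilon>"
    unfolding eventually_sequentially by blast
  have "lp_norm p F (\<lambda>_. ennreal \<epsilon>) \<le> ennreal (real (card F) * \<epsilon>)"
    by (rule lp_norm_le_card_mult[OF p assms(1)]) (use \<epsilon>(1) in auto)
  also have "\<dots> \<le> ennreal \<delta>"
    by (rule ennreal_leI[OF \<epsilon>(2)])
  finally have const: "lp_norm p F (\<lambda>_. ennreal \<epsilon>) \<le> ennreal \<delta>" .
  have "lp_norm p F (lim_dist J) \<le> lp_norm p F (\<lambda>x. (\<Sum>m\<in>{J..<M}. step_cost m (start J x)) + ennreal \<epsilon>)"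
    by (rule lp_norm_mono[OF p_pos]) (rule M)
  also have "\<dots> \<le> lp_norm p F (\<lambda>x. \<Sum>m\<in>{J..<M}. step_cost m (start J x)) + lp_norm p F (\<lambda>_. ennreal \<epsilon>)"
    by (rule lp_norm_add_le[OF p])
  also have "\<dots> \<le> ennreal (2 * (1/2)^J) + ennreal \<delta>"
    using lp_norm_sum_step_cost_le[OF assms(2)] const by (rule add_mono)
  finally show ?thesis .
qed

lemma lp_norm_lim_dist_eq:
  "lp_norm p (I J <+> fs_idx limit_diagram) (lim_dist J) = lp_norm p (unmatched J) (lim_dist J)"
proof (rule lp_norm_eq_restrict)
  show "unmatched J \<subseteq> I J <+> fs_idx limit_diagram"
    unfolding unmatched_def by blast
  fix x assume "x \<in> (I J <+> fs_idx limit_diagram) - unmatched J"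
  then obtain e where "x = Inr e" "e \<in> lim_\<phi> J ` lim_K J"
    unfolding unmatched_def by (elim DiffE PlusE) auto
  then show "lim_dist J x = 0"
    by simp
qed

lemma Wp_limit_diagram_le: "Wp d A p (\<beta> J) limit_diagram \<le> ennreal (2 * (1/2)^J)"
proof -
  have "Wp d A p (\<beta> J) limit_diagram \<le> matching_cost d p (\<beta> J) limit_diagram (lim_K J) (lim_\<phi> J) (lim_z J) lim_w"
    by (rule Wp_le_matching_cost[OF lim_is_matching])
  also have "\<dots> = lp_norm p (unmatched J) (lim_dist J)"
    unfolding matching_cost_eq_lp_norm[OF lim_is_matching] by (rule lp_norm_lim_dist_eq)
  also have "\<dots> \<le> ennreal (2 * (1/2)^J)"
  proof (rule lp_norm_le_finite_subsets[OF p_pos])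
    fix F assume F: "finite F" "F \<subseteq> unmatched J"
    show "lp_norm p F (lim_dist J) \<le> ennreal (2 * (1/2)^J)"
      by (rule ennreal_le_epsilon) (rule lp_norm_lim_dist_finite_le[OF F])
  qed
  finally show ?thesis .
qed

lemma limit_diagram_Dbar_p:
  assumes "\<beta> 0 \<in> Dbar_p X d A p"
  shows "limit_diagram \<in> Dbar_p X d A p"
proof (rule Dbar_p_if_Wp_finite[OF metric_pair p limit_diagram_Dbar assms])
  have "Wp d A p limit_diagram (\<beta> 0) = Wp d A p (\<beta> 0) limit_diagram"
    using Wp_sym[OF emetric A_subset limit_diagram_Dbar Dbar] .
  also have "\<dots> \<le> ennreal (2 * (1/2)^0)"
    by (rule Wp_limit_diagram_le)
  finally show "Wp d A p limit_diagram (\<beta> 0) < top"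
    by (simp add: le_less_trans)
qed

lemma tendsto_limit_diagram:
  assumes "\<And>n. \<alpha> n \<in> Dbar X A" "\<And>k n. N k \<le> n \<Longrightarrow> Wp d A p (\<alpha> n) (\<beta> k) < ennreal ((1/2)^k)"
    and "e > 0"
  shows "\<exists>N'. \<forall>n\<ge>N'. Wp d A p (\<alpha> n) limit_diagram < e"
proof -
  obtain k where k: "ennreal (3 * (1/2)^k) < e"
    using eventually_geometric_less[OF assms(3)] by blast
  have "Wp d A p (\<alpha> n) limit_diagram < e" if "N k \<le> n" for n
  proof -
    have "Wp d A p (\<alpha> n) limit_diagram \<le> Wp d A p (\<alpha> n) (\<beta> k) + Wp d A p (\<beta> k) limit_diagram"
      by (rule Wp_triangle[OF emetric A_subset p assms(1) Dbar limit_diagram_Dbar])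
    also have "\<dots> \<le> ennreal ((1/2)^k) + ennreal (2 * (1/2)^k)"
      using assms(2)[OF that] Wp_limit_diagram_le by (intro add_mono) simp_all
    also have "\<dots> = ennreal (3 * (1/2)^k)"
      by (simp flip: ennreal_plus)
    finally show ?thesis
      using k by simp
  qed
  then show ?thesis
    by blast
qed

end

section \<open>Completeness\<close>

lemma cauchy_fast_subseq:
  fixes ds :: "'b \<Rightarrow> 'b \<Rightarrow> ennreal"
  assumes "\<forall>e>0. \<exists>N. \<forall>m\<ge>N. \<forall>n\<ge>N. ds (s m) (s n) < e"
  obtains N :: "nat \<Rightarrow> nat" where "mono N"
    "\<And>k m n. N k \<le> m \<Longrightarrow> N k \<le> n \<Longrightarrow> ds (s m) (s n) < ennreal ((1/2)^k)"
proof -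
  have "\<forall>k. \<exists>N. \<forall>m\<ge>N. \<forall>n\<ge>N. ds (s m) (s n) < ennreal ((1/2)^k)"
    using assms by simp
  then obtain Nk where Nk: "\<And>k m n. Nk k \<le> m \<Longrightarrow> Nk k \<le> n \<Longrightarrow> ds (s m) (s n) < ennreal ((1/2)^k)"
    by metis
  show ?thesis
  proof
    show "mono (\<lambda>k. \<Sum>i\<le>k. Nk i)"
      by (intro monoI sum_mono2) auto
    show "ds (s m) (s n) < ennreal ((1/2)^k)" if "(\<Sum>i\<le>k. Nk i) \<le> m" "(\<Sum>i\<le>k. Nk i) \<le> n" for k m n
      using that member_le_sum[of k "{..k}" Nk] by (intro Nk) auto
  qed
qed

lemma cauchy_matching_chain:
  fixes \<alpha> :: "nat \<Rightarrow> 'a fsum"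
  assumes "metric_pair X d A" "1 \<le> p" "ecomplete_on X d" "\<And>n. \<alpha> n \<in> Dbar X A"
    and "\<forall>e>0. \<exists>N. \<forall>m\<ge>N. \<forall>n\<ge>N. Wp d A p (\<alpha> m) (\<alpha> n) < e"
  obtains N K \<phi> z w where "matching_chain X d A p (\<lambda>k. \<alpha> (N k)) K \<phi> z w"
    "\<And>k n. N k \<le> n \<Longrightarrow> Wp d A p (\<alpha> n) (\<alpha> (N k)) < ennreal ((1/2)^k)"
proof -
  obtain N where N: "mono N" "\<And>k m n. N k \<le> m \<Longrightarrow> N k \<le> n \<Longrightarrow> Wp d A p (\<alpha> m) (\<alpha> n) < ennreal ((1/2)^k)"
    using cauchy_fast_subseq[OF assms(5)] by blast
  have "Wp d A p (\<alpha> (N k)) (\<alpha> (N (Suc k))) < ennreal ((1/2)^k)" for k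
    using N monoD[OF N(1), of k "Suc k"] by simp
  then have "\<forall>k. \<exists>K \<phi> z w. is_matching A (\<alpha> (N k)) (\<alpha> (N (Suc k))) K \<phi> z w
      \<and> matching_cost d p (\<alpha> (N k)) (\<alpha> (N (Suc k))) K \<phi> z w < ennreal ((1/2)^k)"
    by (meson Wp_lessE)
  then obtain K \<phi> z w where "\<And>k. is_matching A (\<alpha> (N k)) (\<alpha> (N (Suc k))) (K k) (\<phi> k) (z k) (w k)"
      "\<And>k. matching_cost d p (\<alpha> (N k)) (\<alpha> (N (Suc k))) (K k) (\<phi> k) (z k) (w k) < ennreal ((1/2)^k)"
    by metis
  then have "matching_chain X d A p (\<lambda>k. \<alpha> (N k)) K \<phi> z w"
    using assms(1-4) by unfold_locales (auto intro: less_imp_le)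
  then show ?thesis
    using that N(2) by blast
qed

theorem theorem6p9:
  fixes X A :: "'a set" and d :: "'a \<Rightarrow> 'a \<Rightarrow> ennreal" and p :: real
  assumes "metric_pair X d A"
    and "1 \<le> p"
    and "ecomplete_on X d"
  shows "ecomplete_on (Dbar_p X d A p) (Wp d A p)"
  unfolding ecomplete_on_def
proof (intro allI impI, elim conjE)
  fix \<alpha> :: "nat \<Rightarrow> 'a fsum"
  assume \<alpha>: "\<forall>n. \<alpha> n \<in> Dbar_p X d A p"
    and cauchy: "\<forall>e>0. \<exists>N. \<forall>m\<ge>N. \<forall>n\<ge>N. Wp d A p (\<alpha> m) (\<alpha> n) < e"
  have \<alpha>_Dbar: "\<alpha> n \<in> Dbar X A" for n
    using \<alpha> by (simp add: Dbar_p_def)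
  obtain N K \<phi> z w where chain: "matching_chain X d A p (\<lambda>k. \<alpha> (N k)) K \<phi> z w"
    and close: "\<And>k n. N k \<le> n \<Longrightarrow> Wp d A p (\<alpha> n) (\<alpha> (N k)) < ennreal ((1/2)^k)"
    using cauchy_matching_chain[OF assms \<alpha>_Dbar cauchy] by blast
  interpret matching_chain X d A p "\<lambda>k. \<alpha> (N k)" K \<phi> z w
    by (rule chain)
  have "limit_diagram \<in> Dbar_p X d A p"
    using \<alpha> by (intro limit_diagram_Dbar_p) simp
  moreover have "\<forall>e>0. \<exists>N. \<forall>n\<ge>N. Wp d A p (\<alpha> n) limit_diagram < e"
    using tendsto_limit_diagram[where \<alpha> = \<alpha> and N = N, OF \<alpha>_Dbar close] by simp
  ultimately show "\<exists>l\<in>Dbar_p X d A p. \<forall>e>0. \<exists>N. \<forall>n\<ge>N. Wp d A p (\<alpha> n) l < e"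
    by blast
qed

end
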